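(* For $1\le s\le 2^{n-1}$ let $\Lambda(s)$ be the largest value, over all subsets $A\subseteq\{0,1\}^n$ with $|A|=s$, of the maximal eigenvalue of the subgraph of the Hamming cube induced by $A$, and let $\Delta(s)=n-\Lambda(s)$. (i) Let $1\le s\le 2^{n-1}$ and $r = n H^{-1}\!\left(\frac{\log_2 s}{n}\right)$. Then $\Lambda(s) \ge 2\sqrt{r(n-r)} - O_{r\to\infty}\!\left(r^{-1/6}\sqrt{n}\right)$; that is, there are absolute constants $C, r_0>0$ such that $\Lambda(s)\ge 2\sqrt{r(n-r)} - C r^{-1/6}\sqrt n$ whenever $r\ge r_0$. (ii) Let $s = 2^{n-o(n)}$ (with $s\le 2^{n-1}$). Then $\Delta(s) \le \ln\!\left(\frac{2^n}{s}\right)\cdot\left(1+o(1)\right)$, where $o(1)$ tends to $0$ as $n\to\infty$ and $s/2^n\to 0$.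
   Context: The Hamming cube $\{0,1\}^n$ is the graph with edges between vectors at Hamming distance $1$. $H(x)=x\log_2\frac1x+(1-x)\log_2\frac1{1-x}$ is the binary entropy function ($H(0)=0$), which is a strictly increasing bijection $[0,1/2]\to[0,1]$; $H^{-1}$ denotes its inverse on $[0,1]$. *)

theory Defs
  imports "HOL-Analysis.Analysis"
begin

text \<open>Vertices of the Hamming cube {0,1}^n are identified with subsets of {0..<n}
  (indicator vectors); two vertices are adjacent iff their Hamming distance,
  i.e. the size of the symmetric difference, is 1.\<close>

definition cube :: "nat \<Rightarrow> nat set set" where
  "cube n = Pow {..<n}"

definition hadj :: "nat set \<Rightarrow> nat set \<Rightarrow> bool" where
  "hadj x y \<longleftrightarrow> card ((x - y) \<union> (y - x)) = 1"

definition induced_eigenvalue :: "nat set set \<Rightarrow> real \<Rightarrow> bool" where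
  "induced_eigenvalue A k \<longleftrightarrow>
     (\<exists>v :: nat set \<Rightarrow> real. (\<exists>x\<in>A. v x \<noteq> 0) \<and>
        (\<forall>x\<in>A. (\<Sum>y\<in>{y\<in>A. hadj x y}. v y) = k * v x))"

definition max_eigenvalue :: "nat set set \<Rightarrow> real" where
  "max_eigenvalue A = Max {k. induced_eigenvalue A k}"

definition Lambda :: "nat \<Rightarrow> nat \<Rightarrow> real" where
  "Lambda n s = Max {max_eigenvalue A | A. A \<subseteq> cube n \<and> card A = s}"

definition Delta :: "nat \<Rightarrow> nat \<Rightarrow> real" where
  "Delta n s = real n - Lambda n s"

definition bin_entropy :: "real \<Rightarrow> real" where
  "bin_entropy x = (if x = 0 \<or> x = 1 then 0
      else x * log 2 (1 / x) + (1 - x) * log 2 (1 / (1 - x)))"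

definition bin_entropy_inv :: "real \<Rightarrow> real" where
  "bin_entropy_inv y = (THE x. 0 \<le> x \<and> x \<le> 1/2 \<and> bin_entropy x = y)"

end

theory Submission
  imports Defs "Jordan_Normal_Form.Char_Poly"
begin

(* Lower bounds on Lambda come from Rayleigh quotients: the largest eigenvalue of the subgraph
   induced by A is at least <f, M f> / <f, f> for every f supported on A. Take A to contain the
   Hamming ball of radius R in the first m coordinates (times the whole cube in the other n - m),
   which has at most 2^(n - m + m H(R/m)) points, and let f depend only on the weight of the
   first m coordinates, be supported on the levels R - L, ..., R with L about R^(1/3), and be
   shaped there like the Perron vector of a path. The n - m free coordinates contribute n - m,
   the levels contribute about 2 sqrt (R (m - R)) cos (pi / (L + 2)), so
   Lambda >= n - m + 2 sqrt (R (m - R)) - O (R^(-1/6) sqrt m).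
   Part (i) takes m = n and R = floor r. Part (ii) takes m proportional to ln (2^n / s) / eps and
   R = m/2 - sqrt (m ln (2^n / s) / 2); Pinsker's inequality bounds the size of the ball. *)

section \<open>Rayleigh quotients of induced subgraphs\<close>

definition adj_op :: "nat set set \<Rightarrow> (nat set \<Rightarrow> real) \<Rightarrow> nat set \<Rightarrow> real" where
  "adj_op A v x = (\<Sum>y\<in>{y\<in>A. hadj x y}. v y)"

definition quad_form :: "nat set set \<Rightarrow> (nat set \<Rightarrow> real) \<Rightarrow> real" where
  "quad_form A v = (\<Sum>x\<in>A. v x * adj_op A v x)"

definition sq_norm :: "nat set set \<Rightarrow> (nat set \<Rightarrow> real) \<Rightarrow> real" where
  "sq_norm A v = (\<Sum>x\<in>A. (v x)\<^sup>2)"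

lemma induced_eigenvalue_iff:
  "induced_eigenvalue A k \<longleftrightarrow> (\<exists>v. (\<exists>x\<in>A. v x \<noteq> 0) \<and> (\<forall>x\<in>A. adj_op A v x = k * v x))"
  unfolding induced_eigenvalue_def adj_op_def ..

lemma hadj_sym: "hadj x y = hadj y x"
  unfolding hadj_def by (simp add: Un_commute)

lemma adj_op_eq_sum_if: "finite A \<Longrightarrow> adj_op A v x = (\<Sum>y\<in>A. if hadj x y then v y else 0)"
  unfolding adj_op_def by (simp add: sum.inter_filter)

lemma quad_form_cong: "(\<And>x. x \<in> A \<Longrightarrow> u x = v x) \<Longrightarrow> quad_form A u = quad_form A v"
  unfolding quad_form_def adj_op_def by (intro sum.cong) auto

lemma sq_norm_cong: "(\<And>x. x \<in> A \<Longrightarrow> u x = v x) \<Longrightarrow> sq_norm A u = sq_norm A v"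
  unfolding sq_norm_def by (intro sum.cong) auto

lemma sq_norm_supported:
  assumes "A \<subseteq> C" "finite C" "\<And>x. x \<in> C - A \<Longrightarrow> f x = 0"
  shows "sq_norm A f = sq_norm C f"
  unfolding sq_norm_def by (rule sum.mono_neutral_left) (use assms in auto)

lemma quad_form_supported:
  assumes "A \<subseteq> C" "finite C" "\<And>x. x \<in> C - A \<Longrightarrow> f x = 0"
  shows "quad_form A f = quad_form C f"
proof -
  have "adj_op A f x = adj_op C f x" for x
    unfolding adj_op_def by (rule sum.mono_neutral_left) (use assms in auto)
  hence "quad_form A f = (\<Sum>x\<in>A. f x * adj_op C f x)" unfolding quad_form_def by simp
  also have "\<dots> = quad_form C f"
    unfolding quad_form_def by (rule sum.mono_neutral_left) (use assms in auto)
  finally show ?thesis .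
qed

lemma adj_op_add_scaled: "adj_op A (\<lambda>x. u x + t * w x) x = adj_op A u x + t * adj_op A w x"
  unfolding adj_op_def by (simp add: sum.distrib sum_distrib_left)

lemma adj_op_self_adjoint:
  assumes "finite A"
  shows "(\<Sum>x\<in>A. u x * adj_op A w x) = (\<Sum>x\<in>A. w x * adj_op A u x)"
proof -
  have "(\<Sum>x\<in>A. u x * adj_op A w x) = (\<Sum>x\<in>A. \<Sum>y\<in>A. if hadj x y then u x * w y else 0)"
    using assms by (simp add: adj_op_eq_sum_if sum_distrib_left if_distrib cong: if_cong)
  also have "\<dots> = (\<Sum>y\<in>A. \<Sum>x\<in>A. if hadj x y then u x * w y else 0)"
    by (rule sum.swap)
  also have "\<dots> = (\<Sum>y\<in>A. w y * adj_op A u y)"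
    using assms
    by (simp add: adj_op_eq_sum_if sum_distrib_left if_distrib hadj_sym mult.commute cong: if_cong)
  finally show ?thesis .
qed

lemma quad_form_add_scaled:
  assumes "finite A"
  shows "quad_form A (\<lambda>x. u x + t * w x)
    = quad_form A u + 2 * t * (\<Sum>x\<in>A. w x * adj_op A u x) + t\<^sup>2 * quad_form A w"
proof -
  have "quad_form A (\<lambda>x. u x + t * w x) = (\<Sum>x\<in>A. u x * adj_op A u x + t * (u x * adj_op A w x)
      + t * (w x * adj_op A u x) + t\<^sup>2 * (w x * adj_op A w x))"
    unfolding quad_form_def by (intro sum.cong) (auto simp: adj_op_add_scaled algebra_simps power2_eq_square)
  also have "\<dots> = quad_form A u + t * (\<Sum>x\<in>A. u x * adj_op A w x)
      + t * (\<Sum>x\<in>A. w x * adj_op A u x) + t\<^sup>2 * quad_form A w"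
    unfolding quad_form_def by (simp add: sum.distrib sum_distrib_left)
  finally show ?thesis using adj_op_self_adjoint[OF assms, of u w] by simp
qed

lemma sq_norm_add_scaled:
  "sq_norm A (\<lambda>x. u x + t * w x) = sq_norm A u + 2 * t * (\<Sum>x\<in>A. u x * w x) + t\<^sup>2 * sq_norm A w"
proof -
  have "sq_norm A (\<lambda>x. u x + t * w x) = (\<Sum>x\<in>A. (u x)\<^sup>2 + 2 * t * (u x * w x) + t\<^sup>2 * (w x)\<^sup>2)"
    unfolding sq_norm_def by (intro sum.cong) (auto simp: algebra_simps power2_eq_square)
  thus ?thesis unfolding sq_norm_def by (simp add: sum.distrib sum_distrib_left)
qed

lemma sq_norm_nonneg: "sq_norm A v \<ge> 0"
  unfolding sq_norm_def by (simp add: sum_nonneg)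

lemma sq_norm_eq_0_iff: "finite A \<Longrightarrow> sq_norm A v = 0 \<longleftrightarrow> (\<forall>x\<in>A. v x = 0)"
  unfolding sq_norm_def by (simp add: sum_nonneg_eq_0_iff)

lemma quad_form_eq_0_if_sq_norm_eq_0: "finite A \<Longrightarrow> sq_norm A v = 0 \<Longrightarrow> quad_form A v = 0"
  unfolding quad_form_def by (simp add: sq_norm_eq_0_iff)

lemma quad_form_scale: "quad_form A (\<lambda>x. c * v x) = c\<^sup>2 * quad_form A v"
proof -
  have "quad_form A (\<lambda>x. c * v x) = (\<Sum>x\<in>A. c\<^sup>2 * (v x * adj_op A v x))"
    unfolding quad_form_def adj_op_def
    by (intro sum.cong) (auto simp: sum_distrib_left[symmetric] power2_eq_square)
  thus ?thesis unfolding quad_form_def by (simp add: sum_distrib_left)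
qed

lemma sq_norm_scale: "sq_norm A (\<lambda>x. c * v x) = c\<^sup>2 * sq_norm A v"
  unfolding sq_norm_def by (simp add: sum_distrib_left power_mult_distrib)

lemma normalize_rayleigh:
  assumes "sq_norm A v > 0"
  defines "h \<equiv> restrict (\<lambda>x. v x / sqrt (sq_norm A v)) A"
  shows "sq_norm A h = 1" and "quad_form A h = quad_form A v / sq_norm A v"
proof -
  let ?c = "1 / sqrt (sq_norm A v)"
  have "sq_norm A h = sq_norm A (\<lambda>x. ?c * v x)"
    unfolding h_def by (rule sq_norm_cong) simp
  also have "\<dots> = ?c\<^sup>2 * sq_norm A v" by (rule sq_norm_scale)
  finally show "sq_norm A h = 1" using assms by (simp add: power_divide)
  have "quad_form A h = quad_form A (\<lambda>x. ?c * v x)"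
    unfolding h_def by (rule quad_form_cong) simp
  also have "\<dots> = ?c\<^sup>2 * quad_form A v" by (rule quad_form_scale)
  finally show "quad_form A h = quad_form A v / sq_norm A v" using assms by (simp add: power_divide)
qed

lemma quad_form_attains_max_on_unit_sphere:
  assumes fin: "finite A" and ne: "A \<noteq> {}"
  obtains u where "sq_norm A u = 1"
    and "\<And>v. v \<in> extensional A \<Longrightarrow> sq_norm A v = 1 \<Longrightarrow> quad_form A v \<le> quad_form A u"
proof -
  define X where "X = product_topology (\<lambda>_::nat set. euclideanreal) A"
  define S where "S = {v \<in> topspace X. sq_norm A v = 1}"
  have cont_sq_norm: "continuous_map X euclideanreal (sq_norm A)"
    unfolding sq_norm_def X_def using fin by (intro continuous_intros) auto
  have cont_quad_form: "continuous_map X euclideanreal (quad_form A)"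
    unfolding quad_form_def adj_op_def X_def using fin by (intro continuous_intros) auto
  have bounded: "S \<subseteq> PiE A (\<lambda>_. {-1..1})"
  proof
    fix v assume v: "v \<in> S"
    have "\<bar>v x\<bar> \<le> 1" if "x \<in> A" for x
    proof -
      have "(v x)\<^sup>2 \<le> sq_norm A v"
        unfolding sq_norm_def by (rule member_le_sum) (use that fin in auto)
      also have "\<dots> = 1" using v unfolding S_def by simp
      finally show ?thesis by (simp add: abs_square_le_1)
    qed
    moreover have "v \<in> PiE A (\<lambda>_. UNIV)" using v unfolding S_def X_def by simp
    ultimately show "v \<in> PiE A (\<lambda>_. {-1..1})" by (auto simp: PiE_iff abs_le_iff)
  qed
  have closed: "closedin X S"
    unfolding S_def using closedin_continuous_map_preimage[OF cont_sq_norm, of "{1}"] by simp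
  have "compactin X (PiE A (\<lambda>_. {-1..1}))" unfolding X_def by (simp add: compactin_PiE)
  hence "compactin X S" using bounded closed by (rule closed_compactin)
  hence compact_image: "compact (quad_form A ` S)"
    using image_compactin[OF _ cont_quad_form] by simp
  have "sq_norm A (\<lambda>_. 1) > 0"
    unfolding sq_norm_def using fin ne by (simp add: card_gt_0_iff)
  hence "restrict (\<lambda>_. 1 / sqrt (sq_norm A (\<lambda>_. 1))) A \<in> S"
    using normalize_rayleigh(1) unfolding S_def X_def by simp
  hence "S \<noteq> {}" by blast
  then obtain u where uS: "u \<in> S" and umax: "\<And>v. v \<in> S \<Longrightarrow> quad_form A v \<le> quad_form A u"
    using compact_attains_sup[OF compact_image] by blast
  show thesis
  proof (rule that)
    show "sq_norm A u = 1" using uS unfolding S_def by simp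
    fix v assume "v \<in> extensional A" "sq_norm A v = 1"
    hence "v \<in> S" unfolding S_def X_def by (simp add: PiE_def)
    thus "quad_form A v \<le> quad_form A u" by (rule umax)
  qed
qed

lemma rayleigh_attains_max:
  assumes fin: "finite A" and ne: "A \<noteq> {}"
  obtains u where "sq_norm A u = 1" and "\<And>v. quad_form A v \<le> quad_form A u * sq_norm A v"
proof -
  obtain u where u_unit: "sq_norm A u = 1"
    and max: "\<And>v. v \<in> extensional A \<Longrightarrow> sq_norm A v = 1 \<Longrightarrow> quad_form A v \<le> quad_form A u"
    using quad_form_attains_max_on_unit_sphere[OF fin ne] by blast
  have "quad_form A v \<le> quad_form A u * sq_norm A v" for v
  proof (cases "sq_norm A v = 0")
    case True
    thus ?thesis using quad_form_eq_0_if_sq_norm_eq_0[OF fin] by simp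
  next
    case False
    hence pos: "sq_norm A v > 0" using sq_norm_nonneg[of A v] by simp
    have "quad_form A v / sq_norm A v \<le> quad_form A u"
      using max[OF _ normalize_rayleigh(1)[OF pos]] unfolding normalize_rayleigh(2)[OF pos] by simp
    thus ?thesis using pos by (simp add: divide_le_eq)
  qed
  with u_unit show thesis using that by blast
qed

lemma linear_coeff_eq_0_if_nonpos:
  fixes a b :: real
  assumes "\<And>t. a * t + b * t\<^sup>2 \<le> 0"
  shows "a = 0"
proof (rule ccontr)
  assume "a \<noteq> 0"
  define c where "c = 2 * (\<bar>b\<bar> + 1)"
  have c: "c > 0" "\<bar>b\<bar> < c" unfolding c_def by auto
  hence "1 + b / c > 0" by (simp add: abs_less_iff field_simps)
  have "a * (a / c) + b * (a / c)\<^sup>2 = a\<^sup>2 / c * (1 + b / c)"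
    using c(1) by (simp add: power2_eq_square field_simps)
  also have "\<dots> > 0" using \<open>a \<noteq> 0\<close> c \<open>1 + b / c > 0\<close> by (intro mult_pos_pos) auto
  finally show False using assms[of "a / c"] by simp
qed

text \<open>The first variation of \<open>quad_form A - \<rho> * sq_norm A\<close> at the maximiser \<open>u\<close> vanishes;
  in the direction \<open>w = adj_op A u - \<rho> * u\<close> it equals \<open>2 * sq_norm A w\<close>.\<close>

lemma eigenvalue_of_rayleigh_maximizer:
  assumes fin: "finite A" and u_unit: "sq_norm A u = 1"
    and max: "\<And>v. quad_form A v \<le> quad_form A u * sq_norm A v"
  shows "induced_eigenvalue A (quad_form A u)"
proof -
  define \<rho> where "\<rho> = quad_form A u"
  define w where "w x = adj_op A u x - \<rho> * u x" for x
  define D where "D = (\<Sum>x\<in>A. w x * adj_op A u x) - \<rho> * (\<Sum>x\<in>A. u x * w x)"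
  have "2 * D = 0"
  proof (rule linear_coeff_eq_0_if_nonpos)
    fix t :: real
    have "quad_form A (\<lambda>x. u x + t * w x) \<le> \<rho> * sq_norm A (\<lambda>x. u x + t * w x)"
      using max unfolding \<rho>_def by simp
    thus "2 * D * t + (quad_form A w - \<rho> * sq_norm A w) * t\<^sup>2 \<le> 0"
      unfolding quad_form_add_scaled[OF fin] sq_norm_add_scaled D_def
      by (simp add: u_unit \<rho>_def algebra_simps)
  qed
  moreover have "sq_norm A w = D"
  proof -
    have "sq_norm A w = (\<Sum>x\<in>A. w x * adj_op A u x - \<rho> * (u x * w x))"
      unfolding sq_norm_def w_def by (intro sum.cong) (auto simp: power2_eq_square algebra_simps)
    thus ?thesis unfolding D_def by (simp add: sum_subtractf sum_distrib_left)
  qed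
  ultimately have "\<forall>x\<in>A. w x = 0" using sq_norm_eq_0_iff[OF fin] by simp
  hence "\<forall>x\<in>A. adj_op A u x = \<rho> * u x" unfolding w_def by simp
  moreover have "\<exists>x\<in>A. u x \<noteq> 0" using u_unit sq_norm_eq_0_iff[OF fin, of u] by auto
  ultimately show ?thesis unfolding induced_eigenvalue_iff \<rho>_def by blast
qed

lemma exists_eigenvalue_ge_rayleigh:
  assumes fin: "finite A" and pos: "sq_norm A f > 0"
  obtains k where "induced_eigenvalue A k" and "quad_form A f / sq_norm A f \<le> k"
proof -
  have "A \<noteq> {}" using pos unfolding sq_norm_def by auto
  then obtain u where u_unit: "sq_norm A u = 1"
    and max: "\<And>v. quad_form A v \<le> quad_form A u * sq_norm A v"
    using rayleigh_attains_max[OF fin] by blast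
  have "quad_form A f / sq_norm A f \<le> quad_form A u"
    using max[of f] pos by (simp add: divide_le_eq)
  with eigenvalue_of_rayleigh_maximizer[OF fin u_unit max] show thesis using that by blast
qed

definition adj_matrix :: "nat set list \<Rightarrow> real Matrix.mat" where
  "adj_matrix xs = Matrix.mat (length xs) (length xs) (\<lambda>(i, j). if hadj (xs ! i) (xs ! j) then 1 else 0)"

lemma induced_eigenvalue_imp_eigenvalue_adj_matrix:
  assumes dxs: "distinct xs" and eig: "induced_eigenvalue (set xs) k"
  shows "eigenvalue (adj_matrix xs) k"
proof -
  let ?A = "set xs" and ?N = "length xs"
  have bij: "bij_betw ((!) xs) {..<?N} ?A" by (rule bij_betw_nth) (use dxs in auto)
  obtain v where v_nz: "\<exists>x\<in>?A. v x \<noteq> 0" and v_eig: "\<forall>x\<in>?A. adj_op ?A v x = k * v x"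
    using eig unfolding induced_eigenvalue_iff by blast
  define w where "w = Matrix.vec ?N (\<lambda>i. v (xs ! i))"
  have w_carrier: "w \<in> carrier_vec ?N" unfolding w_def by simp
  have w_nz: "w \<noteq> 0\<^sub>v ?N"
  proof
    assume w0: "w = 0\<^sub>v ?N"
    obtain x where "x \<in> ?A" "v x \<noteq> 0" using v_nz by blast
    then obtain i where "i < ?N" "xs ! i = x" by (auto simp: in_set_conv_nth)
    hence "Matrix.vec_index w i = v x" unfolding w_def by simp
    with w0 \<open>i < ?N\<close> \<open>v x \<noteq> 0\<close> show False by simp
  qed
  have "adj_matrix xs *\<^sub>v w = k \<cdot>\<^sub>v w"
  proof (rule eq_vecI)
    show "dim_vec (adj_matrix xs *\<^sub>v w) = dim_vec (k \<cdot>\<^sub>v w)" unfolding adj_matrix_def w_def by simp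
    fix i assume "i < dim_vec (k \<cdot>\<^sub>v w)"
    hence i: "i < ?N" unfolding w_def by simp
    have "Matrix.vec_index (adj_matrix xs *\<^sub>v w) i
        = (\<Sum>j\<in>{..<?N}. (if hadj (xs ! i) (xs ! j) then 1 else 0) * v (xs ! j))"
      using i unfolding adj_matrix_def w_def by (simp add: scalar_prod_def lessThan_atLeast0)
    also have "\<dots> = (\<Sum>y\<in>?A. (if hadj (xs ! i) y then 1 else 0) * v y)"
      using sum.reindex_bij_betw[OF bij, of "\<lambda>y. (if hadj (xs ! i) y then 1 else 0) * v y"] by simp
    also have "\<dots> = (\<Sum>y\<in>?A. if hadj (xs ! i) y then v y else 0)"
      by (intro sum.cong) auto
    also have "\<dots> = adj_op ?A v (xs ! i)"
      by (rule adj_op_eq_sum_if[symmetric]) simp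
    also have "\<dots> = k * v (xs ! i)"
      using v_eig i by simp
    also have "\<dots> = Matrix.vec_index (k \<cdot>\<^sub>v w) i" using i unfolding w_def by simp
    finally show "Matrix.vec_index (adj_matrix xs *\<^sub>v w) i = Matrix.vec_index (k \<cdot>\<^sub>v w) i" .
  qed
  thus ?thesis
    unfolding eigenvalue_def eigenvector_def using w_carrier w_nz by (auto simp: adj_matrix_def)
qed

text \<open>\<open>max_eigenvalue\<close> is a \<open>Max\<close>, which is meaningless on an infinite set.\<close>

lemma finite_induced_eigenvalues:
  assumes "finite A"
  shows "finite {k. induced_eigenvalue A k}"
proof -
  obtain xs where dxs: "distinct xs" and A: "A = set xs"
    using finite_distinct_list[OF assms] by metis
  let ?M = "adj_matrix xs"
  have M_carrier: "?M \<in> carrier_mat (length xs) (length xs)" unfolding adj_matrix_def by simp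
  have "{k. induced_eigenvalue A k} \<subseteq> {k. poly (char_poly ?M) k = 0}"
    using induced_eigenvalue_imp_eigenvalue_adj_matrix[OF dxs] eigenvalue_root_char_poly[OF M_carrier]
    unfolding A by auto
  moreover have "finite {k. poly (char_poly ?M) k = 0}"
    using degree_monic_char_poly[OF M_carrier] by (intro poly_roots_finite) auto
  ultimately show ?thesis by (rule finite_subset)
qed

lemma rayleigh_le_max_eigenvalue:
  assumes "finite A" and "sq_norm A f > 0"
  shows "quad_form A f / sq_norm A f \<le> max_eigenvalue A"
proof -
  obtain k where "induced_eigenvalue A k" and "quad_form A f / sq_norm A f \<le> k"
    using exists_eigenvalue_ge_rayleigh[OF assms] .
  moreover have "k \<le> max_eigenvalue A"
    unfolding max_eigenvalue_def using finite_induced_eigenvalues[OF assms(1)] calculation(1)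
    by (simp add: Max_ge)
  ultimately show ?thesis by simp
qed

lemma finite_cube: "finite (cube n)"
  unfolding cube_def by simp

lemma card_cube: "card (cube n) = 2 ^ n"
  unfolding cube_def by (simp add: card_Pow)

lemma max_eigenvalue_le_Lambda:
  assumes "A \<subseteq> cube n" and "card A = s"
  shows "max_eigenvalue A \<le> Lambda n s"
proof -
  have "{max_eigenvalue A | A. A \<subseteq> cube n \<and> card A = s} = max_eigenvalue ` (Pow (cube n) \<inter> {A. card A = s})"
    by auto
  hence "finite {max_eigenvalue A | A. A \<subseteq> cube n \<and> card A = s}"
    using finite_cube by simp
  thus ?thesis unfolding Lambda_def using assms by (auto intro!: Max_ge)
qed

lemma rayleigh_le_Lambda:
  assumes "A \<subseteq> cube n" and "card A = s" and "sq_norm A f > 0"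
  shows "quad_form A f / sq_norm A f \<le> Lambda n s"
  using rayleigh_le_max_eigenvalue[OF finite_subset[OF assms(1) finite_cube] assms(3)]
    max_eigenvalue_le_Lambda[OF assms(1,2)] by linarith

section \<open>Functions of the Hamming weight of a prefix\<close>

definition flip :: "nat set \<Rightarrow> nat \<Rightarrow> nat set" where
  "flip x i = (if i \<in> x then x - {i} else insert i x)"

definition prefix_weight :: "nat \<Rightarrow> nat set \<Rightarrow> nat" where
  "prefix_weight m x = card (x \<inter> {..<m})"

lemma mem_flip: "z \<in> flip x i \<longleftrightarrow> (z \<in> x \<longleftrightarrow> z \<noteq> i)"
  unfolding flip_def by auto

lemma hadj_iff_flip: "hadj x y \<longleftrightarrow> (\<exists>i. y = flip x i)"
proof
  assume "hadj x y"
  then obtain i where i: "(x - y) \<union> (y - x) = {i}"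
    unfolding hadj_def by (auto simp: card_1_singleton_iff)
  have "z \<in> y \<longleftrightarrow> (z \<in> x \<longleftrightarrow> z \<noteq> i)" for z
    using i by (auto simp: set_eq_iff)
  hence "y = flip x i" by (simp add: set_eq_iff mem_flip)
  thus "\<exists>i. y = flip x i" by blast
next
  assume "\<exists>i. y = flip x i"
  then obtain i where "y = flip x i" by blast
  hence "(x - y) \<union> (y - x) = {i}" by (auto simp: mem_flip)
  thus "hadj x y" unfolding hadj_def by simp
qed

lemma flip_inj: "flip x i = flip x j \<Longrightarrow> i = j"
  by (metis mem_flip)

lemma flip_in_cube_iff: "x \<in> cube n \<Longrightarrow> flip x i \<in> cube n \<longleftrightarrow> i < n"
  unfolding cube_def flip_def by auto

lemma sum_cube_neighbours:
  assumes "x \<in> cube n"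
  shows "(\<Sum>y\<in>{y\<in>cube n. hadj x y}. h y) = (\<Sum>i<n. h (flip x i))"
proof -
  have "bij_betw (flip x) {..<n} {y\<in>cube n. hadj x y}"
    unfolding bij_betw_def
    using flip_in_cube_iff[OF assms] hadj_iff_flip by (auto intro: inj_onI flip_inj)
  thus ?thesis using sum.reindex_bij_betw by metis
qed

lemma prefix_weight_le: "prefix_weight m x \<le> m"
  unfolding prefix_weight_def by (metis card_lessThan card_mono finite_lessThan inf_le2)

lemma prefix_weight_flip_mem: "i < m \<Longrightarrow> i \<in> x \<Longrightarrow> prefix_weight m (flip x i) = prefix_weight m x - 1"
proof -
  assume "i < m" "i \<in> x"
  hence "flip x i \<inter> {..<m} = (x \<inter> {..<m}) - {i}" unfolding flip_def by auto
  thus ?thesis unfolding prefix_weight_def using \<open>i < m\<close> \<open>i \<in> x\<close> by (simp add: card_Diff_singleton)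
qed

lemma prefix_weight_flip_not_mem: "i < m \<Longrightarrow> i \<notin> x \<Longrightarrow> prefix_weight m (flip x i) = prefix_weight m x + 1"
proof -
  assume "i < m" "i \<notin> x"
  hence "flip x i \<inter> {..<m} = insert i (x \<inter> {..<m})" unfolding flip_def by auto
  thus ?thesis unfolding prefix_weight_def using \<open>i \<notin> x\<close> by simp
qed

lemma prefix_weight_flip_ge: "m \<le> i \<Longrightarrow> prefix_weight m (flip x i) = prefix_weight m x"
proof -
  assume "m \<le> i"
  hence "flip x i \<inter> {..<m} = x \<inter> {..<m}" unfolding flip_def by auto
  thus ?thesis unfolding prefix_weight_def by simp
qed

lemma sum_flip_prefix_weight:
  fixes g :: "nat \<Rightarrow> real" and x :: "nat set"
  assumes "m \<le> n"
  defines "k \<equiv> prefix_weight m x"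
  shows "(\<Sum>i<n. g (prefix_weight m (flip x i)))
    = real k * g (k - 1) + real (m - k) * g (k + 1) + real (n - m) * g k"
proof -
  have split: "{..<n} = {..<m} \<union> {m..<n}" using assms by auto
  have "(\<Sum>i<n. g (prefix_weight m (flip x i)))
      = (\<Sum>i<m. g (prefix_weight m (flip x i))) + (\<Sum>i\<in>{m..<n}. g (prefix_weight m (flip x i)))"
    unfolding split by (rule sum.union_disjoint) auto
  also have "(\<Sum>i<m. g (prefix_weight m (flip x i)))
      = (\<Sum>i\<in>{..<m} \<inter> x. g (prefix_weight m (flip x i)))
      + (\<Sum>i\<in>{..<m} - x. g (prefix_weight m (flip x i)))"
    by (rule sum.Int_Diff) simp
  also have "(\<Sum>i\<in>{..<m} \<inter> x. g (prefix_weight m (flip x i))) = (\<Sum>i\<in>{..<m} \<inter> x. g (k - 1))"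
    by (intro sum.cong) (auto simp: prefix_weight_flip_mem k_def)
  also have "\<dots> = real k * g (k - 1)"
    by (simp add: k_def prefix_weight_def Int_commute)
  also have "(\<Sum>i\<in>{..<m} - x. g (prefix_weight m (flip x i))) = (\<Sum>i\<in>{..<m} - x. g (k + 1))"
    by (intro sum.cong) (auto simp: prefix_weight_flip_not_mem k_def)
  also have "\<dots> = real (m - k) * g (k + 1)"
    by (simp add: k_def prefix_weight_def card_Diff_subset_Int Int_commute)
  also have "(\<Sum>i\<in>{m..<n}. g (prefix_weight m (flip x i))) = real (n - m) * g k"
    by (simp add: prefix_weight_flip_ge k_def)
  finally show ?thesis .
qed

lemma card_prefix_weight_eq:
  assumes "m \<le> n"
  shows "card {x\<in>cube n. prefix_weight m x = k} = (m choose k) * 2 ^ (n - m)"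
proof -
  have "bij_betw (\<lambda>x. (x \<inter> {..<m}, x - {..<m})) {x\<in>cube n. prefix_weight m x = k}
          ({B. B \<subseteq> {..<m} \<and> card B = k} \<times> Pow {m..<n})"
  proof (rule bij_betw_byWitness[where f' = "\<lambda>(B, C). B \<union> C"])
    show "(\<lambda>(B, C). B \<union> C) ` ({B. B \<subseteq> {..<m} \<and> card B = k} \<times> Pow {m..<n})
        \<subseteq> {x \<in> cube n. prefix_weight m x = k}"
    proof
      fix z assume "z \<in> (\<lambda>(B, C). B \<union> C) ` ({B. B \<subseteq> {..<m} \<and> card B = k} \<times> Pow {m..<n})"
      then obtain B C where z: "z = B \<union> C" "B \<subseteq> {..<m}" "card B = k" "C \<subseteq> {m..<n}" by auto
      hence "z \<inter> {..<m} = B" by auto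
      thus "z \<in> {x \<in> cube n. prefix_weight m x = k}"
        using z assms unfolding cube_def prefix_weight_def by auto
    qed
  qed (auto simp: cube_def prefix_weight_def)
  hence "card {x\<in>cube n. prefix_weight m x = k}
      = card ({B. B \<subseteq> {..<m} \<and> card B = k} \<times> Pow {m..<n})"
    by (rule bij_betw_same_card)
  thus ?thesis by (simp add: card_cartesian_product n_subsets card_Pow)
qed

definition level_size :: "nat \<Rightarrow> nat \<Rightarrow> nat \<Rightarrow> real" where
  "level_size n m k = real ((m choose k) * 2 ^ (n - m))"

lemma level_size_pos: "k \<le> m \<Longrightarrow> level_size n m k > 0"
  unfolding level_size_def by simp

lemma level_size_Suc:
  assumes "k < m"
  shows "level_size n m (Suc k) * real (Suc k) = level_size n m k * real (m - k)"
proof -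
  have "(m choose Suc k) * Suc k = (m choose k) * (m - k)"
    by (metis binomial_absorb_comp binomial_absorption mult.commute)
  hence "(m choose Suc k) * 2 ^ (n - m) * Suc k = (m choose k) * 2 ^ (n - m) * (m - k)"
    by (metis mult.assoc mult.commute)
  thus ?thesis unfolding level_size_def by (metis of_nat_mult)
qed

lemma sum_cube_prefix_weight:
  fixes F :: "nat \<Rightarrow> real"
  assumes "m \<le> n"
  shows "(\<Sum>x\<in>cube n. F (prefix_weight m x)) = (\<Sum>k\<le>m. level_size n m k * F k)"
proof -
  have "(\<Sum>x\<in>cube n. F (prefix_weight m x))
      = (\<Sum>k\<le>m. \<Sum>x\<in>{x\<in>cube n. prefix_weight m x = k}. F (prefix_weight m x))"
    by (rule sum.group[symmetric]) (use finite_cube prefix_weight_le in auto)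
  also have "\<dots> = (\<Sum>k\<le>m. level_size n m k * F k)"
    using card_prefix_weight_eq[OF assms] by (simp add: level_size_def)
  finally show ?thesis .
qed

lemma sq_norm_prefix_weight:
  assumes "m \<le> n"
  shows "sq_norm (cube n) (\<lambda>x. g (prefix_weight m x)) = (\<Sum>k\<le>m. level_size n m k * (g k)\<^sup>2)"
  unfolding sq_norm_def by (rule sum_cube_prefix_weight[OF assms])

text \<open>Of the \<open>n\<close> flips at a vertex of prefix weight \<open>k\<close>, \<open>n - m\<close> keep the weight, \<open>k\<close> lower it
  and \<open>m - k\<close> raise it.\<close>

lemma quad_form_prefix_weight:
  assumes mn: "m \<le> n"
  shows "quad_form (cube n) (\<lambda>x. g (prefix_weight m x))
    = real (n - m) * (\<Sum>k\<le>m. level_size n m k * (g k)\<^sup>2)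
      + 2 * (\<Sum>k<m. level_size n m k * real (m - k) * g k * g (Suc k))"
proof -
  let ?c = "level_size n m"
  have "quad_form (cube n) (\<lambda>x. g (prefix_weight m x))
      = (\<Sum>x\<in>cube n. (\<lambda>k. g k * (real k * g (k - 1) + real (m - k) * g (k + 1) + real (n - m) * g k))
          (prefix_weight m x))"
    unfolding quad_form_def adj_op_def
    by (intro sum.cong refl) (simp add: sum_cube_neighbours sum_flip_prefix_weight[OF mn])
  also have "\<dots> = (\<Sum>k\<le>m. ?c k * (g k * (real k * g (k - 1) + real (m - k) * g (k + 1) + real (n - m) * g k)))"
    by (rule sum_cube_prefix_weight[OF mn])
  also have "\<dots> = (\<Sum>k\<le>m. ?c k * real k * g k * g (k - 1)
      + ?c k * real (m - k) * g k * g (k + 1) + real (n - m) * (?c k * (g k)\<^sup>2))"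
    by (intro sum.cong refl) (simp only: distrib_left mult_ac power2_eq_square)
  also have "\<dots> = (\<Sum>k\<le>m. ?c k * real k * g k * g (k - 1))
      + (\<Sum>k\<le>m. ?c k * real (m - k) * g k * g (k + 1))
      + real (n - m) * (\<Sum>k\<le>m. ?c k * (g k)\<^sup>2)"
    by (simp add: sum.distrib sum_distrib_left)
  also have "(\<Sum>k\<le>m. ?c k * real k * g k * g (k - 1)) = (\<Sum>k<m. ?c (Suc k) * real (Suc k) * g (Suc k) * g k)"
    by (simp add: sum.atMost_shift)
  also have "\<dots> = (\<Sum>k<m. ?c k * real (m - k) * g k * g (Suc k))"
  proof (intro sum.cong refl)
    fix k assume "k \<in> {..<m}"
    hence "?c (Suc k) * real (Suc k) = ?c k * real (m - k)" by (intro level_size_Suc) simp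
    thus "?c (Suc k) * real (Suc k) * g (Suc k) * g k = ?c k * real (m - k) * g k * g (Suc k)"
      by (metis mult.commute mult.left_commute)
  qed
  also have "(\<Sum>k\<le>m. ?c k * real (m - k) * g k * g (k + 1)) = (\<Sum>k<m. ?c k * real (m - k) * g k * g (Suc k))"
    by (simp add: lessThan_Suc_atMost[symmetric])
  finally show ?thesis by simp
qed

section \<open>The window test function\<close>

text \<open>\<open>path_sine L (j + 1)\<close>, \<open>j = 0, \<dots>, L\<close>, is the Perron eigenvector of the path on \<open>L + 1\<close>
  vertices, with eigenvalue \<open>2 * cos (pi / (L + 2))\<close>.\<close>

definition path_sine :: "nat \<Rightarrow> nat \<Rightarrow> real" where
  "path_sine L j = sin (real j * pi / real (L + 2))"

lemma path_sine_rec: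
  "path_sine L j + path_sine L (j + 2) = 2 * cos (pi / real (L + 2)) * path_sine L (j + 1)"
proof -
  define t where "t = pi / real (L + 2)"
  define a where "a = real (j + 1) * t"
  have "real j * pi / real (L + 2) = a - t" "real (j + 2) * pi / real (L + 2) = a + t"
    "real (j + 1) * pi / real (L + 2) = a"
    unfolding a_def t_def by (simp_all add: algebra_simps add_divide_distrib)
  thus ?thesis unfolding path_sine_def t_def[symmetric] by (simp add: sin_add sin_diff)
qed

lemma path_sine_0: "path_sine L 0 = 0"
  unfolding path_sine_def by simp

lemma path_sine_end: "path_sine L (L + 2) = 0"
  unfolding path_sine_def by simp

lemma path_sine_nonneg:
  assumes "j \<le> L + 2"
  shows "path_sine L j \<ge> 0"
  unfolding path_sine_def
proof (rule sin_ge_zero)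
  have "real j * pi \<le> real (L + 2) * pi" using assms by (intro mult_right_mono) auto
  thus "real j * pi / real (L + 2) \<le> pi" by (simp add: divide_le_eq)
qed simp

lemma path_sine_1_pos: "path_sine L 1 > 0"
  unfolding path_sine_def by (rule sin_gt_zero) (auto simp: divide_less_eq)

lemma sum_path_sine_sq_pos: "(\<Sum>j\<le>L. (path_sine L (j + 1))\<^sup>2) > 0"
proof -
  have "(path_sine L 1)\<^sup>2 \<le> (\<Sum>j\<le>L. (path_sine L (j + 1))\<^sup>2)"
    using member_le_sum[of 0 "{..L}" "\<lambda>j. (path_sine L (j + 1))\<^sup>2"] by simp
  moreover have "(path_sine L 1)\<^sup>2 > 0" using path_sine_1_pos[of L] by simp
  ultimately show ?thesis by linarith
qed

lemma sum_path_sine_adjacent: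
  "(\<Sum>j<L. path_sine L (j + 1) * path_sine L (j + 2))
    = cos (pi / real (L + 2)) * (\<Sum>j\<le>L. (path_sine L (j + 1))\<^sup>2)"
proof -
  let ?s = "path_sine L"
  have "(\<Sum>j\<le>L. ?s (j + 1) * (?s j + ?s (j + 2)))
      = 2 * cos (pi / real (L + 2)) * (\<Sum>j\<le>L. (?s (j + 1))\<^sup>2)"
  proof -
    have "(\<Sum>j\<le>L. ?s (j + 1) * (?s j + ?s (j + 2))) = (\<Sum>j\<le>L. 2 * cos (pi / real (L + 2)) * (?s (j + 1))\<^sup>2)"
      by (intro sum.cong refl) (simp only: path_sine_rec power2_eq_square mult_ac)
    thus ?thesis by (simp add: sum_distrib_left)
  qed
  moreover have "(\<Sum>j\<le>L. ?s (j + 1) * ?s j) = (\<Sum>j<L. ?s (j + 1) * ?s (j + 2))"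
    by (subst sum.atMost_shift) (simp add: path_sine_0 mult.commute numeral_2_eq_2)
  moreover have "(\<Sum>j\<le>L. ?s (j + 1) * ?s (j + 2)) = (\<Sum>j<L. ?s (j + 1) * ?s (j + 2))"
    using path_sine_end[of L] by (simp add: lessThan_Suc_atMost[symmetric])
  ultimately show ?thesis by (simp add: distrib_left sum.distrib)
qed

text \<open>Dividing by \<open>sqrt (level_size n m k)\<close> turns the quadratic form of a function of the
  prefix weight into that of a path whose edge \<open>(k, k + 1)\<close> has weight
  \<open>sqrt ((m - k) * (k + 1))\<close>; on the window \<open>B, \<dots>, B + L\<close> these weights are at least
  \<open>sqrt ((m - (B + L)) * (B + 1))\<close>.\<close>

definition window :: "nat \<Rightarrow> nat \<Rightarrow> nat \<Rightarrow> nat \<Rightarrow> nat \<Rightarrow> real" where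
  "window n m B L k =
    (if B \<le> k \<and> k \<le> B + L then path_sine L (k + 1 - B) / sqrt (level_size n m k) else 0)"

lemma level_size_coupling:
  assumes "k < m"
  shows "level_size n m k * real (m - k)
    = sqrt (level_size n m k) * sqrt (level_size n m (Suc k)) * sqrt (real (m - k) * real (Suc k))"
proof -
  let ?a = "level_size n m k" and ?b = "level_size n m (Suc k)"
  have pos: "?a > 0" "?b > 0" using assms by (auto intro: level_size_pos)
  have "(?a * real (m - k))\<^sup>2 = ?a * ?b * (real (m - k) * real (Suc k))"
    using level_size_Suc[OF assms] by (simp add: power2_eq_square mult_ac)
  hence "?a * real (m - k) = sqrt (?a * ?b * (real (m - k) * real (Suc k)))"
    using pos by (metis of_nat_0_le_iff real_sqrt_unique zero_le_mult_iff less_imp_le)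
  thus ?thesis by (simp add: real_sqrt_mult)
qed

lemma sq_norm_window:
  assumes mn: "m \<le> n" and BL: "B + L \<le> m"
  shows "sq_norm (cube n) (\<lambda>x. window n m B L (prefix_weight m x)) = (\<Sum>j\<le>L. (path_sine L (j + 1))\<^sup>2)"
proof -
  have "sq_norm (cube n) (\<lambda>x. window n m B L (prefix_weight m x))
      = (\<Sum>k\<le>m. if B \<le> k \<and> k \<le> B + L then (path_sine L (k + 1 - B))\<^sup>2 else 0)"
    unfolding sq_norm_prefix_weight[OF mn]
  proof (intro sum.cong refl)
    fix k assume "k \<in> {..m}"
    hence "level_size n m k > 0" by (simp add: level_size_pos)
    thus "level_size n m k * (window n m B L k)\<^sup>2
        = (if B \<le> k \<and> k \<le> B + L then (path_sine L (k + 1 - B))\<^sup>2 else 0)"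
      by (simp add: window_def power_divide)
  qed
  also have "\<dots> = (\<Sum>k\<in>{B..B + L}. (path_sine L (k + 1 - B))\<^sup>2)"
    using BL by (simp add: sum.inter_filter[symmetric]) (intro sum.cong; auto)
  also have "\<dots> = (\<Sum>j\<le>L. (path_sine L (j + 1))\<^sup>2)"
    using sum.shift_bounds_cl_nat_ivl[of "\<lambda>k. (path_sine L (k + 1 - B))\<^sup>2" 0 B L]
    by (simp add: atLeast0AtMost add.commute)
  finally show ?thesis .
qed

lemma quad_form_window_ge:
  assumes mn: "m \<le> n" and BL: "B + L \<le> m"
  defines "S \<equiv> \<Sum>j\<le>L. (path_sine L (j + 1))\<^sup>2"
  shows "quad_form (cube n) (\<lambda>x. window n m B L (prefix_weight m x))
    \<ge> (real (n - m) + 2 * cos (pi / real (L + 2)) * sqrt (real (m - (B + L)) * real (B + 1))) * S"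
proof -
  let ?g = "window n m B L" and ?c = "level_size n m"
  define \<sigma> where "\<sigma> k = (if B \<le> k \<and> k \<le> B + L then path_sine L (k + 1 - B) else 0)" for k
  define W where "W = sqrt (real (m - (B + L)) * real (B + 1))"
  have \<sigma>_nonneg: "\<sigma> k \<ge> 0" for k unfolding \<sigma>_def by (auto intro: path_sine_nonneg)
  have edge: "?c k * real (m - k) * ?g k * ?g (Suc k) \<ge> W * (\<sigma> k * \<sigma> (Suc k))" if k: "k < m" for k
  proof (cases "B \<le> k \<and> Suc k \<le> B + L")
    case True
    have pos: "?c k > 0" "?c (Suc k) > 0" using k by (auto intro: level_size_pos)
    have eq: "?c k * real (m - k) * ?g k * ?g (Suc k) = sqrt (real (m - k) * real (Suc k)) * (\<sigma> k * \<sigma> (Suc k))"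
      using True pos unfolding level_size_coupling[OF k] window_def \<sigma>_def by (simp add: field_simps)
    have "W \<le> sqrt (real (m - k) * real (Suc k))"
      unfolding W_def using True k by (intro real_sqrt_le_mono mult_mono) auto
    hence "W * (\<sigma> k * \<sigma> (Suc k)) \<le> sqrt (real (m - k) * real (Suc k)) * (\<sigma> k * \<sigma> (Suc k))"
      using \<sigma>_nonneg by (intro mult_right_mono) auto
    thus ?thesis unfolding eq .
  next
    case False
    hence "\<sigma> k * \<sigma> (Suc k) = 0" "?g k * ?g (Suc k) = 0" unfolding \<sigma>_def window_def by auto
    thus ?thesis by (simp only: mult.assoc mult_zero_right order_refl)
  qed
  have "(\<Sum>k<m. \<sigma> k * \<sigma> (Suc k)) = (\<Sum>k\<in>{B..<B + L}. \<sigma> k * \<sigma> (Suc k))"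
    by (rule sum.mono_neutral_right) (use BL in \<open>auto simp: \<sigma>_def\<close>)
  also have "\<dots> = (\<Sum>j<L. path_sine L (j + 1) * path_sine L (j + 2))"
    using sum.shift_bounds_nat_ivl[of "\<lambda>k. \<sigma> k * \<sigma> (Suc k)" 0 B L]
    by (simp add: atLeast0LessThan add.commute \<sigma>_def numeral_2_eq_2)
  finally have "(\<Sum>k<m. \<sigma> k * \<sigma> (Suc k)) = cos (pi / real (L + 2)) * S"
    unfolding S_def sum_path_sine_adjacent .
  hence "W * (cos (pi / real (L + 2)) * S) = (\<Sum>k<m. W * (\<sigma> k * \<sigma> (Suc k)))"
    by (simp add: sum_distrib_left[symmetric])
  also have "\<dots> \<le> (\<Sum>k<m. ?c k * real (m - k) * ?g k * ?g (Suc k))"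
    using edge by (intro sum_mono) simp
  finally show ?thesis
    unfolding quad_form_prefix_weight[OF mn] sq_norm_prefix_weight[OF mn, symmetric]
      sq_norm_window[OF assms(1,2), folded S_def] W_def[symmetric]
    by (simp add: algebra_simps)
qed

lemma Lambda_ge_window:
  assumes mn: "m \<le> n" and BL: "B + L \<le> m"
    and window_in_A: "{x\<in>cube n. prefix_weight m x \<le> B + L} \<subseteq> A"
    and A: "A \<subseteq> cube n" "card A = s"
  shows "real (n - m) + 2 * cos (pi / real (L + 2)) * sqrt (real (m - (B + L)) * real (B + 1))
    \<le> Lambda n s"
proof -
  define f where "f x = window n m B L (prefix_weight m x)" for x
  define S where "S = (\<Sum>j\<le>L. (path_sine L (j + 1))\<^sup>2)"
  have vanish: "f x = 0" if "x \<in> cube n - A" for x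
    using that window_in_A unfolding f_def window_def by auto
  have N: "sq_norm A f = S"
    using sq_norm_supported[OF A(1) finite_cube vanish] sq_norm_window[OF mn BL]
    unfolding f_def S_def by simp
  have S_pos: "S > 0" unfolding S_def by (rule sum_path_sine_sq_pos)
  have "(real (n - m) + 2 * cos (pi / real (L + 2)) * sqrt (real (m - (B + L)) * real (B + 1))) * S
      \<le> quad_form A f"
    using quad_form_supported[OF A(1) finite_cube vanish] quad_form_window_ge[OF mn BL]
    unfolding f_def S_def by simp
  hence "real (n - m) + 2 * cos (pi / real (L + 2)) * sqrt (real (m - (B + L)) * real (B + 1))
      \<le> quad_form A f / sq_norm A f"
    using S_pos N by (simp add: le_divide_eq)
  also have "\<dots> \<le> Lambda n s" using rayleigh_le_Lambda[OF A, of f] N S_pos by simp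
  finally show ?thesis .
qed

section \<open>Entropy estimates\<close>

definition ent :: "real \<Rightarrow> real" where
  "ent x = - (x * ln x) - (1 - x) * ln (1 - x)"

lemma bin_entropy_eq_ent:
  assumes "0 \<le> x" "x \<le> 1"
  shows "bin_entropy x = ent x / ln 2"
proof (cases "x = 0 \<or> x = 1")
  case True
  thus ?thesis unfolding bin_entropy_def ent_def by auto
next
  case False
  hence "0 < x" "x < 1" using assms by auto
  thus ?thesis using False unfolding bin_entropy_def ent_def log_def by (simp add: ln_div field_simps)
qed

lemma ent_0: "ent 0 = 0"
  unfolding ent_def by simp

lemma ent_half: "ent (1/2) = ln 2"
  unfolding ent_def by (simp add: ln_div)

lemma ent_has_derivative:
  assumes "0 < x" "x < 1"
  shows "(ent has_real_derivative ln (1 - x) - ln x) (at x)"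
proof -
  have "((\<lambda>x. - (x * ln x) - (1 - x) * ln (1 - x)) has_real_derivative
      - (1 * ln x + x * (1 / x)) - ((-1) * ln (1 - x) + (1 - x) * ((-1) / (1 - x)))) (at x)"
    using assms by (auto intro!: derivative_eq_intros)
  thus ?thesis unfolding ent_def[abs_def] using assms by (simp add: field_simps)
qed

lemma continuous_on_ent: "0 < a \<Longrightarrow> b < 1 \<Longrightarrow> continuous_on {a..b} ent"
  unfolding ent_def[abs_def] by (intro continuous_intros) auto

lemma ent_pos:
  assumes "0 < x" "x < 1"
  shows "ent x > 0"
proof -
  have "- (x * ln x) > 0" using assms by (simp add: mult_pos_neg)
  moreover have "(1 - x) * ln (1 - x) < 0" using assms by (simp add: mult_pos_neg)
  ultimately show ?thesis unfolding ent_def by linarith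
qed

lemma ent_strict_mono:
  assumes "0 \<le> a" "a < b" "b \<le> 1/2"
  shows "ent a < ent b"
proof (cases "a = 0")
  case True
  thus ?thesis using ent_pos[of b] assms by (simp add: ent_0)
next
  case False
  show ?thesis
  proof (rule DERIV_pos_imp_increasing_open[OF assms(2)])
    fix x assume "a < x" "x < b"
    hence "ln x < ln (1 - x)" "0 < x" "x < 1" using assms by auto
    thus "\<exists>y. (ent has_real_derivative y) (at x) \<and> y > 0"
      using ent_has_derivative[of x] by (intro exI[of _ "ln (1 - x) - ln x"]) auto
  qed (use False assms in \<open>auto intro: continuous_on_ent\<close>)
qed

lemma ent_mono: "0 \<le> a \<Longrightarrow> a \<le> b \<Longrightarrow> b \<le> 1/2 \<Longrightarrow> ent a \<le> ent b"
  using ent_strict_mono[of a b] by (cases "a = b") auto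

lemma ent_le_sqrt:
  assumes "0 < x" "x \<le> 1/2"
  shows "ent x \<le> 3 * sqrt x"
proof -
  have sx: "sqrt x > 0" using assms by simp
  have "ln (1 / x) = 2 * ln (1 / sqrt x)"
    using sx assms by (simp add: ln_div ln_sqrt)
  also have "\<dots> \<le> 2 / sqrt x" using ln_le_minus_one[of "1 / sqrt x"] sx by simp
  finally have "x * ln (1 / x) \<le> x * (2 / sqrt x)" using assms by (intro mult_left_mono) auto
  also have "x * (2 / sqrt x) = 2 * sqrt x" using sx assms by (simp add: field_simps)
  finally have first: "- (x * ln x) \<le> 2 * sqrt x" using assms by (simp add: ln_div)
  have "(1 - x) * ln (1 / (1 - x)) \<le> (1 - x) * (1 / (1 - x) - 1)"
    using assms by (intro mult_left_mono ln_le_minus_one) auto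
  also have "\<dots> = x" using assms by (simp add: field_simps)
  finally have second: "- ((1 - x) * ln (1 - x)) \<le> x" using assms by (simp add: ln_div)
  have "x \<le> sqrt x" using assms by (simp add: real_le_rsqrt power2_eq_square)
  with first second show ?thesis unfolding ent_def by linarith
qed

lemma bin_entropy_surj:
  assumes "0 \<le> y" "y \<le> 1"
  obtains x where "0 \<le> x" "x \<le> 1/2" "bin_entropy x = y"
proof (cases "y = 0")
  case True
  thus thesis using that[of 0] by (simp add: bin_entropy_def)
next
  case False
  hence ypos: "y > 0" using assms by simp
  define d where "d = min (1/4) ((y * ln 2 / 3)\<^sup>2)"
  have d: "0 < d" "d \<le> 1/4" unfolding d_def using ypos by auto
  have "ent d \<le> 3 * sqrt d" using d by (intro ent_le_sqrt) auto
  also have "\<dots> \<le> 3 * sqrt ((y * ln 2 / 3)\<^sup>2)" unfolding d_def by (simp del: real_sqrt_abs)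
  also have "\<dots> = y * ln 2" using ypos by simp
  finally have "ent d / ln 2 \<le> y" by (simp add: divide_le_eq)
  moreover have "y \<le> ent (1/2) / ln 2" using assms by (simp add: ent_half)
  moreover have "continuous_on {d..1/2} (\<lambda>x. ent x / ln 2)"
    using d by (intro continuous_on_divide continuous_on_const continuous_on_ent) auto
  ultimately obtain x where "d \<le> x" "x \<le> 1/2" "ent x / ln 2 = y"
    using IVT'[of "\<lambda>x. ent x / ln 2" d y "1/2"] d by auto
  thus thesis using d that[of x] bin_entropy_eq_ent[of x] by auto
qed

lemma bin_entropy_inv:
  assumes "0 \<le> y" "y \<le> 1"
  shows "0 \<le> bin_entropy_inv y \<and> bin_entropy_inv y \<le> 1/2 \<and> bin_entropy (bin_entropy_inv y) = y"
  unfolding bin_entropy_inv_def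
proof (rule theI')
  have "x1 = x2" if "0 \<le> x1" "x1 \<le> 1/2" "bin_entropy x1 = y" "0 \<le> x2" "x2 \<le> 1/2" "bin_entropy x2 = y"
    for x1 x2
  proof -
    have "ent x1 / ln 2 = ent x2 / ln 2" using that bin_entropy_eq_ent[of x1] bin_entropy_eq_ent[of x2] by simp
    hence "ent x1 = ent x2" by simp
    thus ?thesis using ent_strict_mono that by (metis linorder_neqE_linordered_idom less_irrefl)
  qed
  thus "\<exists>!x. 0 \<le> x \<and> x \<le> 1/2 \<and> bin_entropy x = y"
    using bin_entropy_surj[OF assms] by metis
qed

lemma two_mul_le_ln_ratio:
  fixes t :: real
  assumes "0 \<le> t" "t < 1"
  shows "2 * t \<le> ln (1 + t) - ln (1 - t)"
proof -
  define f where "f u = ln (1 + u) - ln (1 - u) - 2 * u" for u :: real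
  have "f 0 \<le> f t"
  proof (rule DERIV_nonneg_imp_nondecreasing[OF assms(1)])
    fix u :: real assume u: "0 \<le> u" "u \<le> t"
    have "(f has_real_derivative 1 / (1 + u) - (-1) / (1 - u) - 2) (at u)"
      unfolding f_def[abs_def] using u assms by (auto intro!: derivative_eq_intros)
    moreover have "u * u \<le> 1 * u" using u assms by (intro mult_right_mono) auto
    hence "1 / (1 + u) - (-1) / (1 - u) - 2 = 2 * u\<^sup>2 / ((1 + u) * (1 - u))"
      using u assms by (simp add: field_simps power2_eq_square)
    moreover have "2 * u\<^sup>2 / ((1 + u) * (1 - u)) \<ge> 0" using u assms by simp
    ultimately show "\<exists>y. (f has_real_derivative y) (at u) \<and> y \<ge> 0" by metis
  qed
  thus ?thesis unfolding f_def by simp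
qed

lemma sq_le_ln_2_minus_ent:
  fixes x :: real
  assumes "0 \<le> x" "x < 1"
  shows "x\<^sup>2 \<le> (1 - x) * ln (1 - x) + (1 + x) * ln (1 + x)"
proof -
  define f where "f u = (1 - u) * ln (1 - u) + (1 + u) * ln (1 + u) - u\<^sup>2" for u :: real
  have "f 0 \<le> f x"
  proof (rule DERIV_nonneg_imp_nondecreasing[OF assms(1)])
    fix u :: real assume u: "0 \<le> u" "u \<le> x"
    have "(f has_real_derivative ((-1) * ln (1 - u) + (1 - u) * ((-1) / (1 - u)))
        + (1 * ln (1 + u) + (1 + u) * (1 / (1 + u))) - 2 * u) (at u)"
      unfolding f_def[abs_def] using u assms
      by (auto intro!: derivative_eq_intros simp: power2_eq_square)
    moreover have "((-1) * ln (1 - u) + (1 - u) * ((-1) / (1 - u)))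
        + (1 * ln (1 + u) + (1 + u) * (1 / (1 + u))) - 2 * u = ln (1 + u) - ln (1 - u) - 2 * u"
      using u assms by (simp add: field_simps)
    moreover have "ln (1 + u) - ln (1 - u) - 2 * u \<ge> 0" using two_mul_le_ln_ratio[of u] u assms by simp
    ultimately show "\<exists>y. (f has_real_derivative y) (at u) \<and> y \<ge> 0" by metis
  qed
  thus ?thesis unfolding f_def by simp
qed

lemma ent_half_minus_le:
  assumes "0 \<le> d" "d < 1/2"
  shows "ent (1/2 - d) \<le> ln 2 - 2 * d\<^sup>2"
proof -
  define x where "x = 2 * d"
  have x: "0 \<le> x" "x < 1" using assms unfolding x_def by auto
  have e1: "1/2 - d = (1 - x) / 2" and e2: "1 - (1 - x) / 2 = (1 + x) / 2"
    unfolding x_def by (auto simp: field_simps)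
  have l1: "ln ((1 - x) / 2) = ln (1 - x) - ln 2" and l2: "ln ((1 + x) / 2) = ln (1 + x) - ln 2"
    using x by (simp_all add: ln_div)
  have "ent (1/2 - d) = ln 2 - ((1 - x) * ln (1 - x) + (1 + x) * ln (1 + x)) / 2"
    unfolding ent_def e1 e2 l1 l2 by (simp add: field_simps)
  moreover have "2 * d\<^sup>2 = x\<^sup>2 / 2" unfolding x_def by (simp add: power2_eq_square)
  ultimately show ?thesis using sq_le_ln_2_minus_ent[OF x] by simp
qed

text \<open>Chernoff's bound: compare each term with the binomial distribution of parameter \<open>R / m\<close>.\<close>

lemma sum_binomial_le_exp_ent:
  assumes m: "0 < m" and R: "2 * R \<le> m"
  shows "(\<Sum>k\<le>R. real (m choose k)) \<le> exp (real m * ent (real R / real m))"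
proof (cases "R = 0")
  case True
  thus ?thesis by (simp add: ent_0)
next
  case False
  define p where "p = real R / real m"
  have p: "0 < p" "p \<le> 1/2" unfolding p_def using m R False by (auto simp: field_simps)
  have Rm: "R \<le> m" using R by simp
  have weight: "p ^ R * (1 - p) ^ (m - R) \<le> p ^ k * (1 - p) ^ (m - k)" if "k \<le> R" for k
  proof -
    have "p ^ R * (1 - p) ^ (m - R) = p ^ k * (p ^ (R - k) * (1 - p) ^ (m - R))"
      using that by (simp add: power_add[symmetric])
    also have "\<dots> \<le> p ^ k * ((1 - p) ^ (R - k) * (1 - p) ^ (m - R))"
      using p by (intro mult_left_mono mult_right_mono power_mono) auto
    also have "\<dots> = p ^ k * (1 - p) ^ (m - k)"
      using that Rm by (simp add: power_add[symmetric])
    finally show ?thesis .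
  qed
  have "(\<Sum>k\<le>R. real (m choose k)) * (p ^ R * (1 - p) ^ (m - R))
      \<le> (\<Sum>k\<le>R. real (m choose k) * (p ^ k * (1 - p) ^ (m - k)))"
    unfolding sum_distrib_right using weight by (intro sum_mono mult_left_mono) auto
  also have "\<dots> \<le> (\<Sum>k\<le>m. real (m choose k) * p ^ k * (1 - p) ^ (m - k))"
    using Rm p by (simp add: mult.assoc) (rule sum_mono2; auto)
  also have "\<dots> = 1"
    using binomial_ring[of p "1 - p" m] by simp
  finally have bound: "(\<Sum>k\<le>R. real (m choose k)) * (p ^ R * (1 - p) ^ (m - R)) \<le> 1" .
  have "ln (p ^ R * (1 - p) ^ (m - R)) = real R * ln p + real (m - R) * ln (1 - p)"
    using p by (simp add: ln_mult ln_realpow)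
  also have "\<dots> = - (real m * ent p)"
    using m Rm unfolding ent_def p_def by (simp add: of_nat_diff field_simps)
  moreover have "p ^ R * (1 - p) ^ (m - R) > 0" using p by simp
  ultimately have "p ^ R * (1 - p) ^ (m - R) = inverse (exp (real m * ent p))"
    by (metis exp_ln exp_minus)
  hence "(\<Sum>k\<le>R. real (m choose k)) / exp (real m * ent p) \<le> 1"
    using bound by (simp add: divide_inverse)
  thus ?thesis unfolding p_def[symmetric] by simp
qed

section \<open>Lower bounds for Lambda from Hamming balls\<close>

lemma cos_ge_one_minus_sq_div_2: "1 - x\<^sup>2 / 2 \<le> cos (x::real)"
proof -
  have "cos x = 1 - 2 * (sin (x / 2))\<^sup>2"
    using cos_double_sin[of "x / 2"] by simp
  moreover have "(sin (x / 2))\<^sup>2 \<le> (x / 2)\<^sup>2"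
    using abs_sin_x_le_abs_x[of "x / 2"] by (metis abs_le_square_iff)
  ultimately show ?thesis by (simp add: power_divide)
qed

lemma powr_third_cube: "0 \<le> x \<Longrightarrow> (x powr (1/3)) ^ 3 = (x::real)"
  by (cases "x = 0") (simp_all add: powr_power)

lemma powr_neg_sixth_le:
  fixes r y :: real
  assumes "0 < r" "r / 4 \<le> y"
  shows "y powr (-1/6) \<le> 2 * r powr (-1/6)"
proof -
  have "y powr (-1/6) \<le> (r / 4) powr (-1/6)" using assms by (intro powr_mono2') auto
  also have "\<dots> = r powr (-1/6) * 4 powr (1/6)"
    using assms by (simp add: powr_divide powr_minus_divide)
  also have "4 powr (1/6) \<le> (4::real) powr (1/2)" by (intro powr_mono) auto
  hence "4 powr (1/6) \<le> (2::real)" by (simp add: powr_half_sqrt)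
  hence "r powr (-1/6) * 4 powr (1/6) \<le> r powr (-1/6) * 2" by (intro mult_left_mono) auto
  finally show ?thesis by simp
qed

lemma cos_pi_div_ge:
  assumes "0 < u" "u \<le> real L + 2"
  shows "cos (pi / real (L + 2)) \<ge> 1 - 8 / u\<^sup>2"
proof -
  have "pi / real (L + 2) \<le> pi / u" using assms by (intro divide_left_mono) auto
  hence "(pi / real (L + 2))\<^sup>2 \<le> (pi / u)\<^sup>2" by (intro power_mono) auto
  also have "\<dots> \<le> 4\<^sup>2 / u\<^sup>2"
    unfolding power_divide using pi_less_4 pi_gt_zero by (intro divide_right_mono power_mono) auto
  finally show ?thesis using cos_ge_one_minus_sq_div_2[of "pi / real (L + 2)"] by simp
qed

text \<open>The window is chosen of width \<open>L \<approx> R powr (1/3)\<close>, which balances the loss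
  \<open>1 - cos (pi / (L + 2)) \<approx> R powr (-2/3)\<close> of the path eigenvalue against the
  relative loss \<open>L / R\<close> in the edge weights.\<close>

lemma window_width:
  fixes R :: nat
  assumes R27: "27 \<le> R"
  defines "L \<equiv> nat \<lfloor>real R powr (1/3)\<rfloor>" and "a \<equiv> real R powr (-2/3)"
  shows "L \<le> R" and "0 < a" and "a \<le> 1/9" and "real R * (1 - a) \<le> real (R - L + 1)"
    and "1 - 8 * a \<le> cos (pi / real (L + 2))"
proof -
  define u where "u = real R powr (1/3)"
  have u_pos: "u > 0" unfolding u_def using R27 by simp
  have u3: "real R = u * (u * u)"
    using powr_third_cube[of "real R"] unfolding u_def by (simp add: power3_eq_cube)
  have a_eq: "a = 1 / u\<^sup>2"
    unfolding a_def u_def using R27 by (simp add: powr_power powr_minus_divide)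
  have "u \<ge> 3"
  proof (rule ccontr)
    assume "\<not> u \<ge> 3"
    hence "u ^ 3 < 3 ^ 3" using u_pos by (intro power_strict_mono) auto
    thus False using u3 R27 by (simp add: power3_eq_cube)
  qed
  hence uu: "u * u \<ge> 9" using mult_mono[of 3 u 3 u] by simp
  thus "0 < a" "a \<le> 1/9" unfolding a_eq power2_eq_square using u_pos by (auto simp: field_simps)
  have Ra: "real R * a = u" unfolding a_eq u3 using u_pos by (simp add: power2_eq_square)
  have L: "real L \<le> u" "u < real L + 1" unfolding L_def u_def[symmetric] using u_pos by auto
  have "u * 1 \<le> u * (u * u)" using uu u_pos by (intro mult_left_mono) auto
  thus LR: "L \<le> R" using L u3 by linarith
  show "real R * (1 - a) \<le> real (R - L + 1)" using LR L Ra by (simp add: algebra_simps of_nat_diff)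
  show "1 - 8 * a \<le> cos (pi / real (L + 2))"
    using cos_pi_div_ge[OF u_pos, of L] L unfolding a_eq by simp
qed

lemma window_estimate:
  fixes R m :: nat
  assumes R27: "27 \<le> R"
  defines "L \<equiv> nat \<lfloor>real R powr (1/3)\<rfloor>"
  shows "L \<le> R"
    and "2 * sqrt (real R * real (m - R)) - 18 * real R powr (-1/6) * sqrt (real m)
      \<le> 2 * cos (pi / real (L + 2)) * sqrt (real (m - R) * real (R - L + 1))"
proof -
  define a where "a = real R powr (-2/3)"
  define \<phi> where "\<phi> = sqrt (real R * real (m - R))"
  note width = window_width[OF R27, folded L_def a_def]
  show "L \<le> R" by (rule width(1))
  have "1 - a \<le> sqrt (1 - a)" using width by (intro real_le_rsqrt) (simp add: power2_eq_square)
  hence "\<phi> * (1 - a) \<le> \<phi> * sqrt (1 - a)" unfolding \<phi>_def by (intro mult_left_mono) auto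
  also have "\<dots> = sqrt (real (m - R) * (real R * (1 - a)))"
    unfolding \<phi>_def by (simp add: real_sqrt_mult mult_ac)
  also have "\<dots> \<le> sqrt (real (m - R) * real (R - L + 1))"
    using width by (intro real_sqrt_le_mono mult_left_mono) auto
  finally have "2 * (1 - 8 * a) * (\<phi> * (1 - a))
      \<le> 2 * cos (pi / real (L + 2)) * sqrt (real (m - R) * real (R - L + 1))"
    using width unfolding \<phi>_def by (intro mult_mono) auto
  moreover have "2 * (1 - 8 * a) * (\<phi> * (1 - a)) \<ge> 2 * \<phi> - 18 * (\<phi> * a)"
    using width unfolding \<phi>_def by (simp add: algebra_simps)
  moreover have "\<phi> * a \<le> sqrt (real R * real m) * a"
    unfolding \<phi>_def using width by (intro mult_right_mono real_sqrt_le_mono mult_left_mono) auto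
  moreover have "sqrt (real R * real m) * a = real R powr (-1/6) * sqrt (real m)"
    unfolding a_def by (simp add: real_sqrt_mult flip: powr_half_sqrt powr_add)
  ultimately show "2 * sqrt (real R * real (m - R)) - 18 * real R powr (-1/6) * sqrt (real m)
      \<le> 2 * cos (pi / real (L + 2)) * sqrt (real (m - R) * real (R - L + 1))"
    unfolding \<phi>_def by linarith
qed

lemma card_prefix_ball_le:
  assumes mn: "m \<le> n" and m: "0 < m" and Rm: "2 * R \<le> m"
  shows "real (card {x\<in>cube n. prefix_weight m x \<le> R}) \<le> 2 ^ (n - m) * exp (real m * ent (real R / real m))"
proof -
  have "real (card {x\<in>cube n. prefix_weight m x \<le> R}) = (\<Sum>x\<in>cube n. if prefix_weight m x \<le> R then 1 else 0)"
    using finite_cube by (simp add: sum.inter_filter[symmetric])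
  also have "\<dots> = (\<Sum>k\<le>m. level_size n m k * (if k \<le> R then 1 else 0))"
    by (rule sum_cube_prefix_weight[OF mn])
  also have "\<dots> = (\<Sum>k\<le>R. level_size n m k)"
    using Rm by (intro sum.mono_neutral_cong_right) auto
  also have "\<dots> = 2 ^ (n - m) * (\<Sum>k\<le>R. real (m choose k))"
    unfolding level_size_def by (simp add: sum_distrib_left mult_ac)
  also have "\<dots> \<le> 2 ^ (n - m) * exp (real m * ent (real R / real m))"
    using sum_binomial_le_exp_ent[OF m Rm] by (intro mult_left_mono) auto
  finally show ?thesis .
qed

text \<open>A set of size \<open>s\<close> containing the Hamming ball of radius \<open>R\<close> in the first \<open>m\<close>
  coordinates (times the whole cube in the others) supports the window test function.\<close>

lemma Lambda_ge_ball:
  fixes n m R s :: nat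
  assumes mn: "m \<le> n" and R27: "27 \<le> R" and Rm: "2 * R \<le> m"
    and size: "2 ^ (n - m) * exp (real m * ent (real R / real m)) \<le> real s" and sn: "s \<le> 2 ^ n"
  shows "real (n - m) + 2 * sqrt (real R * real (m - R)) - 18 * real R powr (-1/6) * sqrt (real m)
    \<le> Lambda n s"
proof -
  define L where "L = nat \<lfloor>real R powr (1/3)\<rfloor>"
  note LR = window_estimate(1)[OF R27, folded L_def]
  note window = window_estimate(2)[OF R27, of m, folded L_def]
  define ball where "ball = {x\<in>cube n. prefix_weight m x \<le> R}"
  have "real (card ball) \<le> real s"
    using card_prefix_ball_le[OF mn _ Rm] size R27 Rm unfolding ball_def by fastforce
  then obtain A where A: "ball \<subseteq> A" "A \<subseteq> cube n" "card A = s"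
    using exists_subset_between[of ball s "cube n"] finite_cube sn
    unfolding card_cube ball_def by auto
  have "real (n - m) + 2 * cos (pi / real (L + 2)) * sqrt (real (m - (R - L + L)) * real (R - L + 1))
      \<le> Lambda n s"
    using LR A Rm by (intro Lambda_ge_window[OF mn]) (auto simp: ball_def)
  thus ?thesis using LR window by simp
qed

section \<open>Lower bound in terms of the entropy radius\<close>

lemma entropy_radius:
  assumes "1 \<le> s" "s \<le> 2 ^ (n - 1)" "0 < n"
  defines "x \<equiv> bin_entropy_inv (log 2 (real s) / real n)"
  shows "0 \<le> x" and "x \<le> 1/2" and "exp (real n * ent x) = real s"
proof -
  have "log 2 (real s) \<le> log 2 (2 ^ (n - 1))" using assms by (subst log_le_cancel_iff) auto
  hence "0 \<le> log 2 (real s) / real n" "log 2 (real s) / real n \<le> 1"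
    using assms by (auto simp: divide_le_eq)
  note x = bin_entropy_inv[OF this, folded x_def]
  thus "0 \<le> x" "x \<le> 1/2" by auto
  have "real n * ent x = ln (real s)"
    using x bin_entropy_eq_ent[of x] assms by (simp add: log_def field_simps)
  thus "exp (real n * ent x) = real s" using assms by simp
qed

lemma le_two_power_if_le_two_power_pred: "s \<le> 2 ^ (n - 1) \<Longrightarrow> s \<le> (2::nat) ^ n"
  using power_increasing[of "n - 1" n "2::nat"] by linarith

lemma sqrt_prod_floor_gap:
  fixes r :: real and n R :: nat
  assumes R: "real R \<le> r" "r < real R + 1" and r: "1 \<le> r" "2 * r \<le> real n"
  shows "2 * sqrt (r * (real n - r)) - 2 * sqrt (real R * real (n - R)) \<le> 3 * r powr (-1/6) * sqrt (real n)"
proof -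
  define a where "a = sqrt (r * (real n - r))"
  define b where "b = sqrt (real R * real (n - R))"
  have a2: "a\<^sup>2 = r * (real n - r)" unfolding a_def using r by simp
  have b2: "b\<^sup>2 = real R * (real n - real R)" unfolding b_def using R r by (simp add: of_nat_diff)
  have diff: "a\<^sup>2 - b\<^sup>2 = (r - real R) * (real n - r - real R)" unfolding a2 b2 by (simp add: algebra_simps)
  have "a\<^sup>2 - b\<^sup>2 \<le> 1 * real n" unfolding diff using R r by (intro mult_mono) auto
  moreover have "(r - real R) * (real n - r - real R) \<ge> 0" using R r by (intro mult_nonneg_nonneg) auto
  hence "b\<^sup>2 \<le> a\<^sup>2" using diff by linarith
  moreover have a_sq_ge: "a\<^sup>2 \<ge> r * real n / 2"
  proof -
    have "r * (real n / 2 - r) \<ge> 0" using r by (intro mult_nonneg_nonneg) auto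
    thus ?thesis unfolding a2 by (simp add: algebra_simps)
  qed
  hence a_pos: "a > 0" unfolding a_def using r by simp
  moreover have "b \<ge> 0" unfolding b_def by simp
  ultimately have "b \<le> a" "a\<^sup>2 - b\<^sup>2 \<le> real n" by (auto intro: power2_le_imp_le)
  moreover have "a\<^sup>2 - b\<^sup>2 - (a - b) * a = b * (a - b)" by (simp add: power2_eq_square algebra_simps)
  moreover have "b * (a - b) \<ge> 0" using \<open>b \<le> a\<close> \<open>b \<ge> 0\<close> by simp
  ultimately have "(a - b) * a \<le> real n" by linarith
  hence "2 * a - 2 * b \<le> 2 * (real n / a)" using a_pos by (simp add: field_simps)
  also have "2 * (real n / a) \<le> 3 * r powr (-1/6) * sqrt (real n)"
  proof (rule power2_le_imp_le)
    have "(2 * (real n / a))\<^sup>2 = 4 * (real n)\<^sup>2 / a\<^sup>2" by (simp add: power_divide power_mult_distrib)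
    also have "\<dots> \<le> 4 * (real n)\<^sup>2 / (r * real n / 2)"
      using a_sq_ge a_pos r by (intro divide_left_mono) auto
    also have "\<dots> = 8 * real n * r powr (-1)" using r by (simp add: power2_eq_square powr_minus_divide)
    also have "\<dots> \<le> 9 * real n * r powr (-1/3)"
      using r by (intro mult_mono powr_mono) auto
    also have "\<dots> = (3 * r powr (-1/6) * sqrt (real n))\<^sup>2"
      using r by (simp add: power_mult_distrib powr_power)
    finally show "(2 * (real n / a))\<^sup>2 \<le> (3 * r powr (-1/6) * sqrt (real n))\<^sup>2" .
  qed simp
  finally show ?thesis unfolding a_def b_def .
qed

lemma Lambda_ge_entropy_radius:
  fixes n s :: nat and r :: real
  assumes s: "1 \<le> s" "s \<le> 2 ^ (n - 1)"
    and r: "r = real n * bin_entropy_inv (log 2 (real s) / real n)" and r28: "28 \<le> r"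
  shows "2 * sqrt (r * (real n - r)) - 40 * r powr (-1/6) * sqrt (real n) \<le> Lambda n s"
proof -
  have n: "0 < n" using r r28 by (cases n) auto
  define x where "x = bin_entropy_inv (log 2 (real s) / real n)"
  note x = entropy_radius[OF s n, folded x_def]
  have rx: "r = real n * x" unfolding r x_def ..
  define R where "R = nat \<lfloor>r\<rfloor>"
  have R: "real R \<le> r" "r < real R + 1" unfolding R_def using r28 by auto
  have "real n * (2 * x) \<le> real n * 1" using x by (intro mult_left_mono) auto
  hence rn: "2 * r \<le> real n" unfolding rx by simp
  have R27: "27 \<le> R" and Rn: "2 * R \<le> n" using R r28 rn by linarith+
  have "real R / real n \<le> x" using R(1) rx n by (simp add: divide_le_eq mult.commute)
  hence "ent (real R / real n) \<le> ent x" using x by (intro ent_mono) auto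
  hence "exp (real n * ent (real R / real n)) \<le> exp (real n * ent x)" by (simp add: mult_left_mono)
  hence "2 ^ (n - n) * exp (real n * ent (real R / real n)) \<le> real s" using x(3) by simp
  moreover have "s \<le> 2 ^ n" using s(2) by (rule le_two_power_if_le_two_power_pred)
  ultimately have "2 * sqrt (real R * real (n - R)) - 18 * real R powr (-1/6) * sqrt (real n) \<le> Lambda n s"
    using Lambda_ge_ball[OF order_refl R27 Rn] by simp
  moreover have "real R powr (-1/6) \<le> 2 * r powr (-1/6)"
    using R r28 by (intro powr_neg_sixth_le) auto
  hence "18 * real R powr (-1/6) * sqrt (real n) \<le> 36 * r powr (-1/6) * sqrt (real n)"
    by (intro mult_right_mono) auto
  moreover have "r powr (-1/6) * sqrt (real n) \<ge> 0" by simp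
  ultimately show ?thesis using sqrt_prod_floor_gap[OF R _ rn] r28 by linarith
qed

section \<open>Sets of size \<open>2 ^ (n - o(n))\<close>\<close>

lemma sqrt_one_minus_ge:
  fixes x :: real
  assumes "0 \<le> x" "x \<le> 1"
  shows "1 - x / 2 - x\<^sup>2 / 2 \<le> sqrt (1 - x)"
proof -
  have "((1 - x) * (1 + x / 2))\<^sup>2 = (1 - x) * (1 - 3/4 * x\<^sup>2 - x ^ 3 / 4)"
    by (simp add: power2_eq_square power3_eq_cube field_simps)
  also have "\<dots> \<le> (1 - x) * 1"
  proof (rule mult_left_mono)
    have "0 \<le> x\<^sup>2" "0 \<le> x ^ 3" using assms by simp_all
    thus "1 - 3/4 * x\<^sup>2 - x ^ 3 / 4 \<le> 1" by linarith
  qed (use assms in simp)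
  finally have "(1 - x) * (1 + x / 2) \<le> sqrt (1 - x)" by (simp add: real_le_rsqrt)
  moreover have "(1 - x) * (1 + x / 2) = 1 - x / 2 - x\<^sup>2 / 2" by (simp add: power2_eq_square field_simps)
  ultimately show ?thesis by simp
qed

lemma sqrt_prod_near_half:
  fixes m R :: nat
  assumes "0 < m" "2 * R \<le> m"
  defines "d \<equiv> real m / 2 - real R"
  shows "real m - 2 * d\<^sup>2 / real m - 8 * d ^ 4 / real m ^ 3 \<le> 2 * sqrt (real R * real (m - R))"
proof -
  define x where "x = 4 * d\<^sup>2 / (real m)\<^sup>2"
  have d: "0 \<le> d" "d \<le> real m / 2" using assms unfolding d_def by auto
  hence "d\<^sup>2 \<le> (real m / 2)\<^sup>2" by (intro power_mono)
  hence x: "0 \<le> x" "x \<le> 1" unfolding x_def using assms(1) by (auto simp: field_simps)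
  have "real R * real (m - R) = (real m / 2)\<^sup>2 * (1 - x)"
    unfolding x_def d_def using assms by (simp add: of_nat_diff field_simps power2_eq_square)
  hence "2 * sqrt (real R * real (m - R)) = real m * sqrt (1 - x)"
    using assms by (simp add: real_sqrt_mult)
  moreover have "real m * (1 - x / 2 - x\<^sup>2 / 2) \<le> real m * sqrt (1 - x)"
    using sqrt_one_minus_ge[OF x] by (intro mult_left_mono) auto
  moreover have "real m * (1 - x / 2 - x\<^sup>2 / 2) = real m - 2 * d\<^sup>2 / real m - 8 * d ^ 4 / real m ^ 3"
    unfolding x_def using assms by (simp add: field_simps power2_eq_square power4_eq_xxxx power3_eq_cube)
  ultimately show ?thesis by simp
qed

lemma ent_near_half_le:
  fixes m R :: nat
  assumes "0 < R" "2 * R < m"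
  defines "d \<equiv> real m / 2 - real R"
  shows "real m * ent (real R / real m) \<le> real m * ln 2 - 2 * d\<^sup>2 / real m"
proof -
  have "real R / real m = 1/2 - d / real m" unfolding d_def using assms by (simp add: field_simps)
  moreover have "0 \<le> d / real m" "d / real m < 1/2" unfolding d_def using assms by (auto simp: field_simps)
  ultimately have "ent (real R / real m) \<le> ln 2 - 2 * (d / real m)\<^sup>2"
    using ent_half_minus_le by presburger
  hence "real m * ent (real R / real m) \<le> real m * (ln 2 - 2 * (d / real m)\<^sup>2)"
    by (intro mult_left_mono) auto
  also have "\<dots> = real m * ln 2 - 2 * d\<^sup>2 / real m"
    using assms(2) by (simp add: power2_eq_square field_simps)
  finally show ?thesis .
qed

text \<open>For \<open>R = m/2 - d\<close> the Hamming ball of radius \<open>R\<close> in \<open>m\<close> coordinates has at most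
  \<open>2 ^ m * exp (- 2 * d\<^sup>2 / m)\<close> points, while \<open>2 * sqrt (R * (m - R)) \<approx> m - 2 * d\<^sup>2 / m\<close>.\<close>

lemma Delta_le_near_half:
  fixes n m R s :: nat
  assumes mn: "m \<le> n" and R27: "27 \<le> R" and Rm: "2 * R < m" and sn: "s \<le> 2 ^ n"
  defines "d \<equiv> real m / 2 - real R"
  assumes size: "2 ^ n * exp (- (2 * d\<^sup>2 / real m)) \<le> real s"
  shows "Delta n s \<le> 2 * d\<^sup>2 / real m + 8 * d ^ 4 / real m ^ 3 + 18 * real R powr (-1/6) * sqrt (real m)"
proof -
  have m: "0 < m" using Rm by simp
  have "exp (real m * ent (real R / real m)) \<le> exp (real m * ln 2 - 2 * d\<^sup>2 / real m)"
    using ent_near_half_le[OF _ Rm] R27 unfolding d_def by simp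
  also have "\<dots> = 2 ^ m * exp (- (2 * d\<^sup>2 / real m))"
    by (simp add: exp_diff exp_minus field_simps exp_of_nat_mult)
  finally have "2 ^ (n - m) * exp (real m * ent (real R / real m)) \<le> 2 ^ (n - m) * (2 ^ m * exp (- (2 * d\<^sup>2 / real m)))"
    by (intro mult_left_mono) auto
  also have "\<dots> = 2 ^ n * exp (- (2 * d\<^sup>2 / real m))"
    using mn by (simp add: mult.assoc flip: power_add)
  finally have "real (n - m) + 2 * sqrt (real R * real (m - R)) - 18 * real R powr (-1/6) * sqrt (real m)
      \<le> Lambda n s"
    using Lambda_ge_ball[OF mn R27 _ _ sn] Rm size by simp
  thus ?thesis
    using sqrt_prod_near_half[OF m, of R, folded d_def] Rm mn unfolding Delta_def
    by simp
qed

lemma powr_third_le: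
  fixes x y :: real
  assumes "0 \<le> x" "0 \<le> y" "x \<le> y ^ 3"
  shows "x powr (1/3) \<le> y"
proof (rule ccontr)
  assume "\<not> x powr (1/3) \<le> y"
  hence "y ^ 3 < (x powr (1/3)) ^ 3" using assms(2) by (intro power_strict_mono) auto
  thus False using assms powr_third_cube[OF assms(1)] by simp
qed

lemma window_error_le:
  fixes e l :: real and m R :: nat
  assumes e: "0 < e" and l: "0 \<le> l" "15552 \<le> l * e\<^sup>2"
    and m: "0 < m" "real m \<le> 192 / e * l" and R: "real m / 4 \<le> real R"
  shows "18 * real R powr (-1/6) * sqrt (real m) \<le> e * l / 3"
proof -
  have "real R powr (-1/6) \<le> 2 * real m powr (-1/6)"
    using R m by (intro powr_neg_sixth_le) auto
  hence "18 * real R powr (-1/6) * sqrt (real m) \<le> 36 * (real m powr (-1/6) * real m powr (1/2))"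
    using m by (simp add: powr_half_sqrt mult_right_mono)
  also have "real m powr (-1/6) * real m powr (1/2) = real m powr (1/3)"
    by (simp flip: powr_add)
  also have "real m powr (1/3) \<le> e * l / 108"
  proof (rule powr_third_le)
    have "192 * 108 ^ 3 \<le> (l * e\<^sup>2)\<^sup>2" using l power_mono[OF l(2), of 2] by simp
    hence "192 * 108 ^ 3 * l \<le> (l * e\<^sup>2)\<^sup>2 * l" using l by (intro mult_right_mono) auto
    hence "(192 * 108 ^ 3 * l) / (e * 108 ^ 3) \<le> ((l * e\<^sup>2)\<^sup>2 * l) / (e * 108 ^ 3)"
      using e by (intro divide_right_mono) auto
    moreover have "(192 * 108 ^ 3 * l) / (e * 108 ^ 3) = 192 / e * l" by simp
    moreover have "((l * e\<^sup>2)\<^sup>2 * l) / (e * 108 ^ 3) = (e * l / 108) ^ 3"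
      using e by (simp add: field_simps power2_eq_square power3_eq_cube)
    ultimately show "real m \<le> (e * l / 108) ^ 3" using m by linarith
  qed (use e l in auto)
  finally show ?thesis by simp
qed

lemma near_half_errors_le:
  fixes e l t d :: real and m :: nat
  assumes e: "0 < e" and l: "0 < l" and m: "96 / e * l \<le> real m" "192 \<le> real m"
    and t: "t\<^sup>2 = l * real m / 2" "1 \<le> t" "t \<le> real m / 8" and d: "t \<le> d" "d < t + 1"
  shows "2 * d\<^sup>2 / real m \<le> l + 1" and "8 * d ^ 4 / real m ^ 3 \<le> e * l / 3"
proof -
  have "d\<^sup>2 \<le> (t + 1)\<^sup>2" using d t by (intro power_mono) auto
  hence "2 * d\<^sup>2 / real m \<le> 2 * (t + 1)\<^sup>2 / real m" using m by (intro divide_right_mono) auto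
  also have "\<dots> = l + (4 * t + 2) / real m"
    using m unfolding power2_sum t(1) by (simp add: field_simps)
  also have "(4 * t + 2) / real m \<le> 1" using t m by simp
  finally show "2 * d\<^sup>2 / real m \<le> l + 1" by simp
  have "d ^ 4 \<le> (2 * t) ^ 4" using d t by (intro power_mono) auto
  also have "(2 * t) ^ 4 = 16 * (t\<^sup>2)\<^sup>2" by (simp add: power_mult_distrib flip: power_mult)
  also have "\<dots> = 4 * l\<^sup>2 * (real m)\<^sup>2" unfolding t(1) by (simp add: power2_eq_square)
  finally have "8 * d ^ 4 / real m ^ 3 \<le> 8 * (4 * l\<^sup>2 * (real m)\<^sup>2) / real m ^ 3"
    using m by (intro divide_right_mono) auto
  also have "\<dots> = 32 * l\<^sup>2 / real m" using m by (simp add: power2_eq_square power3_eq_cube)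
  also have "\<dots> \<le> 32 * l\<^sup>2 / (96 / e * l)"
    using m mult_pos_pos[of "real m" "96 / e * l"] e l by (intro divide_left_mono) auto
  also have "\<dots> = e * l / 3" using e l by (simp add: power2_eq_square)
  finally show "8 * d ^ 4 / real m ^ 3 \<le> e * l / 3" .
qed

text \<open>With \<open>l = ln (2 ^ n / s)\<close>, take \<open>m \<approx> 96 l / e\<close> and \<open>d \<approx> sqrt (l m / 2)\<close>: then the
  ball of radius \<open>m/2 - d\<close> has at most \<open>2 ^ n * exp (- l) = s\<close> points, and all error terms
  are \<open>O (e * l)\<close>.\<close>

lemma Delta_le_log_ratio:
  fixes n s :: nat and e :: real
  assumes e: "0 < e" "e \<le> 1" and s: "1 \<le> s" "s \<le> 2 ^ n"
  defines "l \<equiv> ln (2 ^ n / real s)"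
  assumes l: "3 / e \<le> l" "2 \<le> l" "15552 \<le> l * e\<^sup>2" and n: "192 / e * l \<le> real n"
  shows "Delta n s \<le> l * (1 + e)"
proof -
  define m where "m = nat \<lceil>96 / e * l\<rceil>"
  define t where "t = sqrt (l * real m / 2)"
  define R where "R = nat \<lfloor>real m / 2 - t\<rfloor>"
  define d where "d = real m / 2 - real R"
  have "96 \<le> 96 / e" using e by (simp add: field_simps)
  hence el: "96 * l \<le> 96 / e * l" "96 * 2 \<le> 96 / e * l"
    using l e by (intro mult_right_mono mult_mono; simp)+
  have m: "96 / e * l \<le> real m" "real m < 96 / e * l + 1"
    unfolding m_def using el ceiling_correct[of "96 / e * l"] by auto
  moreover have "192 / e * l = 2 * (96 / e * l)" by simp
  ultimately have m_le: "real m \<le> 192 / e * l" and "real m \<le> real n" and m192: "192 \<le> real m"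
    using n el by linarith+
  hence mn: "m \<le> n" by simp
  have t2: "t\<^sup>2 = l * real m / 2" unfolding t_def using l m192 by simp
  have "2 * 192 \<le> l * real m" using l m192 by (intro mult_mono) auto
  hence t1: "1 \<le> t" unfolding t_def by simp
  have "l \<le> real m / 32" using el(1) m(1) l(2) by linarith
  hence "l * real m / 2 \<le> real m / 32 * real m / 2" by (intro divide_right_mono mult_right_mono) auto
  moreover have "(real m / 8)\<^sup>2 = real m / 32 * real m / 2" by (simp add: power2_eq_square)
  ultimately have "t\<^sup>2 \<le> (real m / 8)\<^sup>2" unfolding t2 by simp
  hence t8: "t \<le> real m / 8" by (rule power2_le_imp_le) (use m192 in auto)
  have "0 \<le> real m / 2 - t" using t8 m192 by simp
  hence R_floor: "real R \<le> real m / 2 - t" "real m / 2 - t < real R + 1"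
    unfolding R_def using floor_correct[of "real m / 2 - t"] by auto
  hence d: "t \<le> d" "d < t + 1" unfolding d_def by linarith+
  have R27: "27 \<le> R" and Rm: "2 * R < m" and R4: "real m / 4 \<le> real R"
    using R_floor t1 t8 m192 by linarith+
  have l_eq: "2 * t\<^sup>2 / real m = l" unfolding t2 using m192 by simp
  have "t\<^sup>2 \<le> d\<^sup>2" using d t1 by (intro power_mono) auto
  hence "l \<le> 2 * d\<^sup>2 / real m" unfolding l_eq[symmetric] using m192 by (intro divide_right_mono) auto
  hence "2 ^ n * exp (- (2 * d\<^sup>2 / real m)) \<le> 2 ^ n * exp (- l)" by simp
  also have "\<dots> = real s" unfolding l_def using s by (simp add: exp_minus)
  finally have Delta: "Delta n s \<le> 2 * d\<^sup>2 / real m + 8 * d ^ 4 / real m ^ 3 + 18 * real R powr (-1/6) * sqrt (real m)"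
    using Delta_le_near_half[OF mn R27 Rm s(2)] unfolding d_def by simp
  note errors = near_half_errors_le[OF e(1) _ m(1) m192 t2 t1 t8 d]
  have third: "18 * real R powr (-1/6) * sqrt (real m) \<le> e * l / 3"
    using window_error_le[OF e(1) _ l(3) _ m_le R4] l m192 by simp
  have "1 \<le> e * l / 3" using l e by (simp add: field_simps)
  thus ?thesis using Delta errors third l by (simp add: algebra_simps)
qed

lemma eventually_ln_ratio_ge:
  fixes s :: "nat \<Rightarrow> nat"
  assumes pos: "\<And>n. 0 < s n" and lim: "(\<lambda>n. real (s n) / 2 ^ n) \<longlonglongrightarrow> 0"
  shows "eventually (\<lambda>n. K \<le> ln (2 ^ n / real (s n))) sequentially"
proof -
  have "eventually (\<lambda>n. real (s n) / 2 ^ n < exp (- K)) sequentially"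
    by (rule order_tendstoD(2)[OF lim]) simp
  thus ?thesis
  proof (rule eventually_mono)
  fix n assume less: "real (s n) / 2 ^ n < exp (- K)"
  have "0 < real (s n) / 2 ^ n" using pos[of n] by simp
  hence "ln (real (s n) / 2 ^ n) < ln (exp (- K))" using less by (subst ln_less_cancel_iff) auto
  moreover have "ln (2 ^ n / real (s n)) = - ln (real (s n) / 2 ^ n)" using pos[of n] by (simp add: ln_div)
  ultimately show "K \<le> ln (2 ^ n / real (s n))" by simp
  qed
qed

lemma eventually_ln_ratio_le:
  fixes s :: "nat \<Rightarrow> nat"
  assumes pos: "\<And>n. 0 < s n" and lim: "(\<lambda>n. (real n - log 2 (real (s n))) / real n) \<longlonglongrightarrow> 0"
    and c: "0 < c"
  shows "eventually (\<lambda>n. c * ln (2 ^ n / real (s n)) \<le> real n) sequentially"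
proof -
  have "eventually (\<lambda>n. (real n - log 2 (real (s n))) / real n < 1 / (c * ln 2)) sequentially"
    by (rule order_tendstoD(2)[OF lim]) (use c in simp)
  moreover have "eventually (\<lambda>n. 1 \<le> n) sequentially" by (rule eventually_ge_at_top)
  ultimately show ?thesis
  proof eventually_elim
    case (elim n)
    have eq: "ln (2 ^ n / real (s n)) = ln 2 * (real n - log 2 (real (s n)))"
      using pos[of n] by (simp add: ln_div ln_realpow log_def algebra_simps)
    have "c * ln (2 ^ n / real (s n)) = c * ln 2 * real n * ((real n - log 2 (real (s n))) / real n)"
      unfolding eq using elim(2) by (simp add: field_simps)
    also have "\<dots> \<le> c * ln 2 * real n * (1 / (c * ln 2))"
      using elim c by (intro mult_left_mono) auto
    also have "\<dots> = real n" using c by simp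
    finally show ?case .
  qed
qed

lemma eventually_Delta_le_ln_ratio:
  fixes s :: "nat \<Rightarrow> nat" and \<epsilon> :: real
  assumes s: "\<And>n. 1 \<le> s n \<and> s n \<le> 2 ^ (n - 1)"
    and lim_log: "(\<lambda>n. (real n - log 2 (real (s n))) / real n) \<longlonglongrightarrow> 0"
    and lim_ratio: "(\<lambda>n. real (s n) / 2 ^ n) \<longlonglongrightarrow> 0" and \<epsilon>: "0 < \<epsilon>"
  shows "eventually (\<lambda>n. Delta n (s n) \<le> ln (2 ^ n / real (s n)) * (1 + \<epsilon>)) sequentially"
proof -
  define e where "e = min \<epsilon> 1"
  define K where "K = max (max (3 / e) 2) (15552 / e\<^sup>2)"
  have e: "0 < e" "e \<le> 1" "e \<le> \<epsilon>" unfolding e_def using \<epsilon> by auto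
  have pos: "0 < s n" for n using s[of n] by simp
  have s_le: "s n \<le> 2 ^ n" for n using s[of n] le_two_power_if_le_two_power_pred by blast
  have c: "0 < 192 / e" using e by simp
  show ?thesis
    using eventually_ln_ratio_ge[OF pos lim_ratio, of K] eventually_ln_ratio_le[OF pos lim_log c]
  proof eventually_elim
    case (elim n)
    define l where "l = ln (2 ^ n / real (s n))"
    have l: "3 / e \<le> l" "2 \<le> l" "15552 / e\<^sup>2 \<le> l" using elim(1) unfolding K_def l_def by auto
    hence "15552 \<le> l * e\<^sup>2" using e by (simp add: field_simps)
    hence "Delta n (s n) \<le> l * (1 + e)"
      using Delta_le_log_ratio[OF e(1,2) _ s_le, of n] s[of n] l elim(2) unfolding l_def by simp
    also have "\<dots> \<le> l * (1 + \<epsilon>)" using e l by (intro mult_left_mono) auto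
    finally show ?case unfolding l_def .
  qed
qed

theorem corollary1p15:
  shows "(\<exists>C r0 :: real. C > 0 \<and> r0 > 0 \<and>
           (\<forall>n s :: nat. \<forall>r :: real.
              1 \<le> s \<longrightarrow> s \<le> 2 ^ (n - 1) \<longrightarrow>
              r = real n * bin_entropy_inv (log 2 (real s) / real n) \<longrightarrow>
              r \<ge> r0 \<longrightarrow>
              Lambda n s \<ge> 2 * sqrt (r * (real n - r)) - C * r powr (-1/6) * sqrt (real n)))
       \<and>
         (\<forall>s :: nat \<Rightarrow> nat.
            (\<forall>n. 1 \<le> s n \<and> s n \<le> 2 ^ (n - 1)) \<longrightarrow>
            ((\<lambda>n. (real n - log 2 (real (s n))) / real n) \<longlonglongrightarrow> 0) \<longrightarrow>
            ((\<lambda>n. real (s n) / 2 ^ n) \<longlonglongrightarrow> 0) \<longrightarrow>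
            (\<forall>\<epsilon> > 0. eventually (\<lambda>n. Delta n (s n) \<le> ln (2 ^ n / real (s n)) * (1 + \<epsilon>)) sequentially))"
proof
  show "\<exists>C r0 :: real. C > 0 \<and> r0 > 0 \<and>
           (\<forall>n s :: nat. \<forall>r :: real.
              1 \<le> s \<longrightarrow> s \<le> 2 ^ (n - 1) \<longrightarrow>
              r = real n * bin_entropy_inv (log 2 (real s) / real n) \<longrightarrow>
              r \<ge> r0 \<longrightarrow>
              Lambda n s \<ge> 2 * sqrt (r * (real n - r)) - C * r powr (-1/6) * sqrt (real n))"
    using Lambda_ge_entropy_radius by (intro exI[of _ 40] exI[of _ 28]) auto
qed (use eventually_Delta_le_ln_ratio in blast)

end
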